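(* Let $n\ge 1$. Every element of the inverse braid monoid of the sphere $IBr_n(S^2)$ can be written uniquely in the form $$(\sigma_{i_1}\sigma_{i_1-1}\cdots\sigma_1)(\sigma_{i_2}\cdots\sigma_2)\cdots(\sigma_{i_k}\cdots\sigma_k)\;\epsilon_{k+1,n}\,x\,\epsilon_{k+1,n}\;(\sigma_k\sigma_{k+1}\cdots\sigma_{j_k})\cdots(\sigma_1\sigma_2\cdots\sigma_{j_1}),$$ where $k\in\{0,\dots,n\}$, $0\le i_1<\dots<i_k\le n-1$, $0\le j_1<\dots<j_k\le n-1$, each block $\sigma_{i_r}\cdots\sigma_r$ (resp. $\sigma_r\cdots\sigma_{j_r}$) is the descending (resp. ascending) product of consecutive generators and is empty when $i_r=r-1$ (resp. $j_r=r-1$), and $x$ is an element of the sphere braid group $Br_k(S^2)$ on the first $k$ strings (a word in $\sigma_1^{\pm1},\dots,\sigma_{k-1}^{\pm1}$), with $k$, the indices and the element $x\in Br_k(S^2)$ uniquely determined; writing $x$ in the Gillette–Van Buskirk (Markov-type) normal form of $Br_k(S^2)$ gives a unique normal form word.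
   Context: $IBr_n(S^2)$ is the monoid of partial braids on the sphere: isotopy classes of braids in $S^2\times[0,1]$ on $n$ base points from which some strings may be deleted; the product is concatenation followed by deletion of all strings that are not complete, and the product is written left to right. $\sigma_i$ ($1\le i\le n-1$) is the standard generator crossing strings $i$ and $i+1$, $\epsilon_i$ is the trivial braid with the $i$th string deleted, and $\epsilon_{k+1,n}=\epsilon_{k+1}\epsilon_{k+2}\cdots\epsilon_n$ is the trivial braid on the first $k$ strings with strings $k+1,\dots,n$ deleted ($\epsilon_{n+1,n}=1$). $Br_k(S^2)$ is the $k$-string braid group of the sphere. *)

theory Defs
  imports "HOL-Analysis.Analysis"
begin

text \<open>The sphere S^2 is the unit sphere in real^3.  A configuration of strings
indexed by a finite set A of labels is a map c :: nat => real^3 sending A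
injectively into S^2 (and every label outside A to 0).  A partial braid with
string set A is a path in the configuration space of A starting at the base
configuration and ending at base points.  Isotopy classes of partial braids are
homotopy classes of such paths (rel endpoints) in the configuration space.\<close>

definition S2 :: "(real^3) set" where
  "S2 = sphere 0 1"

definition bp_angle :: "nat \<Rightarrow> real" where
  "bp_angle i = pi - pi / real i"

text \<open>Base points: the i-th base point lies on the equator at angle bp_angle i.
Labels 1,2,3,... are used; the base points are in this order along an arc of
the equator.\<close>
definition bp :: "nat \<Rightarrow> real^3" where
  "bp i = vector [cos (bp_angle i), sin (bp_angle i), 0]"

definition conf :: "nat set \<Rightarrow> (nat \<Rightarrow> real^3) set" where
  "conf A = {c. (\<forall>a\<in>A. c a \<in> S2) \<and> inj_on c A \<and> (\<forall>a. a \<notin> A \<longrightarrow> c a = 0)}"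

definition base :: "nat set \<Rightarrow> nat \<Rightarrow> real^3" where
  "base A = (\<lambda>a. if a \<in> A then bp a else 0)"

definition pbraid_rep :: "nat set \<Rightarrow> (real \<Rightarrow> nat \<Rightarrow> real^3) \<Rightarrow> bool" where
  "pbraid_rep A \<gamma> \<longleftrightarrow> finite A \<and> path \<gamma> \<and> path_image \<gamma> \<subseteq> conf A \<and>
     pathstart \<gamma> = base A \<and> (\<forall>a\<in>A. pathfinish \<gamma> a \<in> range bp)"

definition pclass :: "(real \<Rightarrow> nat \<Rightarrow> real^3) \<Rightarrow> (real \<Rightarrow> nat \<Rightarrow> real^3) set" where
  "pclass \<gamma> = {\<delta>. \<exists>A. pbraid_rep A \<gamma> \<and> homotopic_paths (conf A) \<gamma> \<delta>}"

definition IBr :: "nat \<Rightarrow> (real \<Rightarrow> nat \<Rightarrow> real^3) set set" where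
  "IBr n = {pclass \<gamma> | \<gamma> A. pbraid_rep A \<gamma> \<and> A \<subseteq> {1..n} \<and>
              (\<forall>a\<in>A. pathfinish \<gamma> a \<in> bp ` {1..n})}"

definition Br :: "nat \<Rightarrow> (real \<Rightarrow> nat \<Rightarrow> real^3) set set" where
  "Br k = {pclass \<gamma> | \<gamma>. pbraid_rep {1..k} \<gamma> \<and>
              (\<forall>a\<in>{1..k}. pathfinish \<gamma> a \<in> bp ` {1..k})}"

text \<open>Composition of representatives: follow gamma, keep only the strings that
end at a base point where a string of delta starts, and continue them along
delta.  The product is written left to right.\<close>
definition pcomp_dom :: "(real \<Rightarrow> nat \<Rightarrow> real^3) \<Rightarrow> (real \<Rightarrow> nat \<Rightarrow> real^3) \<Rightarrow> nat set" where
  "pcomp_dom \<gamma> \<delta> = {a. pathstart \<gamma> a \<noteq> 0 \<and>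
      (\<exists>c. pathfinish \<gamma> a = bp c \<and> pathstart \<delta> c \<noteq> 0)}"

definition pcomp :: "(real \<Rightarrow> nat \<Rightarrow> real^3) \<Rightarrow> (real \<Rightarrow> nat \<Rightarrow> real^3) \<Rightarrow> real \<Rightarrow> nat \<Rightarrow> real^3" where
  "pcomp \<gamma> \<delta> =
     (\<lambda>t a. if a \<in> pcomp_dom \<gamma> \<delta> then \<gamma> t a else 0) +++
     (\<lambda>t a. if a \<in> pcomp_dom \<gamma> \<delta> then \<delta> t (inv bp (pathfinish \<gamma> a)) else 0)"

definition pmult :: "(real \<Rightarrow> nat \<Rightarrow> real^3) set \<Rightarrow> (real \<Rightarrow> nat \<Rightarrow> real^3) set \<Rightarrow> (real \<Rightarrow> nat \<Rightarrow> real^3) set"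
  (infixl "\<cdot>\<^sub>p" 70) where
  "X \<cdot>\<^sub>p Y = \<Union>{pclass (pcomp \<gamma> \<delta>) | \<gamma> \<delta>. \<gamma> \<in> X \<and> \<delta> \<in> Y}"

definition pone :: "nat \<Rightarrow> (real \<Rightarrow> nat \<Rightarrow> real^3) set" where
  "pone n = pclass (\<lambda>t. base {1..n})"

definition peps :: "nat \<Rightarrow> nat \<Rightarrow> (real \<Rightarrow> nat \<Rightarrow> real^3) set" where
  "peps n i = pclass (\<lambda>t. base ({1..n} - {i}))"

text \<open>Rotation of the equatorial point at angle alpha by angle phi about the
axis through the equatorial point at angle m.\<close>
definition rot_eq :: "real \<Rightarrow> real \<Rightarrow> real \<Rightarrow> real^3" where
  "rot_eq m \<phi> \<alpha> = vector
     [cos (\<alpha> - m) * cos m - sin (\<alpha> - m) * cos \<phi> * sin m,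
      cos (\<alpha> - m) * sin m + sin (\<alpha> - m) * cos \<phi> * cos m,
      sin (\<alpha> - m) * sin \<phi>]"

text \<open>sigma_i in IBr_n(S^2): strings i and i+1 exchange by a half twist (a
rotation by pi about the axis through the midpoint of the arc between them);
all other strings 1..n are constant.\<close>
definition psigma :: "nat \<Rightarrow> nat \<Rightarrow> (real \<Rightarrow> nat \<Rightarrow> real^3) set" where
  "psigma n i = pclass (\<lambda>t a.
      if a \<in> {i, i+1} then rot_eq ((bp_angle i + bp_angle (i+1)) / 2) (pi * t) (bp_angle a)
      else base {1..n} a)"

definition pprod :: "nat \<Rightarrow> (real \<Rightarrow> nat \<Rightarrow> real^3) set list \<Rightarrow> (real \<Rightarrow> nat \<Rightarrow> real^3) set" where
  "pprod n xs = foldl (\<cdot>\<^sub>p) (pone n) xs"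

definition peps_range :: "nat \<Rightarrow> nat \<Rightarrow> (real \<Rightarrow> nat \<Rightarrow> real^3) set" where
  "peps_range n k = pprod n (map (peps n) [k+1..<n+1])"

definition desc_block :: "nat \<Rightarrow> nat \<Rightarrow> nat \<Rightarrow> (real \<Rightarrow> nat \<Rightarrow> real^3) set" where
  "desc_block n i r = pprod n (map (psigma n) (rev [r..<i+1]))"

definition asc_block :: "nat \<Rightarrow> nat \<Rightarrow> nat \<Rightarrow> (real \<Rightarrow> nat \<Rightarrow> real^3) set" where
  "asc_block n r j = pprod n (map (psigma n) [r..<j+1])"

text \<open>The normal form word: I = [i_1,...,i_k], J = [j_1,...,j_k].\<close>
definition normal_form ::
  "nat \<Rightarrow> nat \<Rightarrow> nat list \<Rightarrow> nat list \<Rightarrow> (real \<Rightarrow> nat \<Rightarrow> real^3) set \<Rightarrow> (real \<Rightarrow> nat \<Rightarrow> real^3) set" where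
  "normal_form n k I J x =
     pprod n (map (\<lambda>r. desc_block n (I ! (r - 1)) r) [1..<k+1]) \<cdot>\<^sub>p
     peps_range n k \<cdot>\<^sub>p x \<cdot>\<^sub>p peps_range n k \<cdot>\<^sub>p
     pprod n (map (\<lambda>r. asc_block n r (J ! (r - 1))) (rev [1..<k+1]))"

end

theory Submission
  imports Defs
begin

(* Every representative gamma carries a string set A (the labels present)
   and an injective "finishing map" fin gamma sending each string to the base point where it
   ends; both are invariants of the class.  Call X a braid from A to B when X is the class of
   such a gamma with fin gamma ` A = B.  Concatenation of paths makes these classes a category:
   products of braids from A to B and from B to C are braids from A to C, the product is
   associative, trivial braids are identities, and reversed paths give two-sided inverses.

   The normal form is then a sandwich L x R: the left factor L (the descending blocks followed
   by epsilon_{k+1,n}) is a braid from A = {i_1+1,...,i_k+1} onto {1..k}, and the right factor R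
   is a braid from {1..k} onto B = {j_1+1,...,j_k+1}; this is read off from the partial
   permutations realised by the generators.  Since L and R are invertible, x |-> L x R is a
   bijection from Br k onto the braids from A to B.  As every element of IBr n is a braid from
   some A to some B inside {1..n}, and the increasing lists I, J are determined by A and B,
   existence and uniqueness of the normal form follow. *)

type_synonym cfg = "nat \<Rightarrow> real^3"
type_synonym pth = "real \<Rightarrow> cfg"

lemma norm3_eq1: "norm (v::real^3) = 1 \<longleftrightarrow> (v$1)^2 + (v$2)^2 + (v$3)^2 = 1"
  by (simp add: norm_eq_1 inner_vec_def sum_3 power2_eq_square)

lemma bp_S2: "bp i \<in> S2"
  by (simp add: S2_def bp_def norm3_eq1)

lemma bp_nz: "bp i \<noteq> 0"
  using bp_S2[of i] by (auto simp: S2_def)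

lemma bp_angle_rng: "0 \<le> bp_angle i \<and> bp_angle i \<le> pi"
proof (cases "i = 0")
  case False
  then have "real i \<ge> 1" by simp
  then have "pi / real i \<le> pi" "pi / real i \<ge> 0"
    by (simp_all add: divide_le_eq pi_gt_zero less_imp_le)
  then show ?thesis by (simp add: bp_angle_def)
qed (simp add: bp_angle_def)

lemma bp_angle_inj: "bp_angle i = bp_angle j \<Longrightarrow> i = j"
proof -
  assume "bp_angle i = bp_angle j"
  then have e: "pi / real i = pi / real j" by (simp add: bp_angle_def)
  show "i = j"
  proof (cases "i = 0 \<or> j = 0")
    case True then show ?thesis using e pi_gt_zero by (auto simp: divide_eq_0_iff)
  next
    case False then show ?thesis using e pi_gt_zero by (simp add: field_simps)
  qed
qed

lemma bp_angle_mono: "1 \<le> i \<Longrightarrow> i < j \<Longrightarrow> bp_angle i < bp_angle j"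
proof -
  assume "1 \<le> i" "i < j"
  then have "pi / real j < pi / real i"
    by (intro divide_strict_left_mono) auto
  then show ?thesis by (simp add: bp_angle_def)
qed

lemma bp_inj: "inj bp"
proof (rule injI)
  fix i j assume e: "bp i = bp j"
  have "(bp i)$1 = (bp j)$1" by (simp only: e)
  then have "cos (bp_angle i) = cos (bp_angle j)"
    by (simp add: bp_def)
  then have "bp_angle i = bp_angle j"
    using bp_angle_rng[of i] bp_angle_rng[of j] cos_inj_pi[of "bp_angle i" "bp_angle j"] by auto
  then show "i = j" by (rule bp_angle_inj)
qed

lemma inv_bp [simp]: "inv bp (bp c) = c"
  by (simp add: bp_inj)

lemma bp_eq_iff [simp]: "bp a = bp b \<longleftrightarrow> a = b"
  using bp_inj by (auto dest: injD)

definition rl :: "(nat \<Rightarrow> nat) \<Rightarrow> nat set \<Rightarrow> cfg \<Rightarrow> cfg" where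
  "rl h X c = (\<lambda>b. if b \<in> X then c (h b) else 0)"

lemma rl_cont: "continuous_on U (rl h X)"
proof (rule continuous_on_coordinatewise_then_product)
  fix b
  show "continuous_on U (\<lambda>c. rl h X c b)"
  proof (cases "b \<in> X")
    case True
    then have "(\<lambda>c. rl h X c b) = (\<lambda>c. c (h b))" by (simp add: rl_def fun_eq_iff)
    moreover have "continuous_on U (\<lambda>c. c (h b))"
      by (rule continuous_on_subset[OF continuous_on_product_coordinates]) simp
    ultimately show ?thesis by metis
  next
    case False
    then show ?thesis by (simp add: rl_def)
  qed
qed

lemma rl_conf: "inj_on h X \<Longrightarrow> h ` X \<subseteq> A \<Longrightarrow> c \<in> conf A \<Longrightarrow> rl h X c \<in> conf X"
  by (auto simp: conf_def rl_def inj_on_def image_subset_iff)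

lemma rl_cong: "(\<And>b. b \<in> X \<Longrightarrow> h b = h' b) \<Longrightarrow> rl h X = rl h' X"
  by (auto simp: rl_def fun_eq_iff)

lemma rl_rl_path: "(\<And>b. b \<in> X \<Longrightarrow> h b \<in> Y) \<Longrightarrow> rl h X \<circ> (rl g Y \<circ> \<gamma>) = rl (g \<circ> h) X \<circ> \<gamma>"
  by (auto simp: rl_def fun_eq_iff)

lemma base_nz_iff: "base A a \<noteq> 0 \<longleftrightarrow> a \<in> A"
  by (simp add: base_def bp_nz)

lemma base_conf: "base A \<in> conf A"
  by (auto simp: conf_def base_def bp_S2 inj_on_def)

text \<open>The string set of a representative is visible at its start, hence unique.\<close>

lemma rep_start_iff: "pbraid_rep A \<gamma> \<Longrightarrow> pathstart \<gamma> a \<noteq> 0 \<longleftrightarrow> a \<in> A"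
  by (simp add: pbraid_rep_def base_nz_iff)

lemma rep_unique: "pbraid_rep A \<gamma> \<Longrightarrow> pbraid_rep B \<gamma> \<Longrightarrow> A = B"
  using rep_start_iff by blast

lemma rep_conf: "pbraid_rep A \<gamma> \<Longrightarrow> t \<in> {0..1} \<Longrightarrow> \<gamma> t \<in> conf A"
  by (auto simp: pbraid_rep_def path_image_def)

lemma rep_finish_conf: "pbraid_rep A \<gamma> \<Longrightarrow> pathfinish \<gamma> \<in> conf A"
  by (auto simp: pathfinish_def rep_conf)

lemma rl_path: "pbraid_rep A \<gamma> \<Longrightarrow> path (rl h X \<circ> \<gamma>)"
  unfolding pbraid_rep_def
  by (metis continuous_on_subset path_continuous_image rl_cont subset_UNIV)

lemma rl_img: "pbraid_rep A \<gamma> \<Longrightarrow> inj_on h X \<Longrightarrow> h ` X \<subseteq> A \<Longrightarrow> path_image (rl h X \<circ> \<gamma>) \<subseteq> conf X"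
  unfolding path_image_compose pbraid_rep_def by (auto intro!: rl_conf[of h X A])

lemma rl_id_hom: "pbraid_rep A \<gamma> \<Longrightarrow> homotopic_paths (conf A) (rl id A \<circ> \<gamma>) \<gamma>"
proof (rule homotopic_paths_eq)
  assume r: "pbraid_rep A \<gamma>"
  show "path (rl id A \<circ> \<gamma>)" by (rule rl_path[OF r])
  show "path_image (rl id A \<circ> \<gamma>) \<subseteq> conf A" by (rule rl_img[OF r]) auto
  show "(rl id A \<circ> \<gamma>) t = \<gamma> t" if "t \<in> {0..1}" for t
    using rep_conf[OF r that] by (auto simp: rl_def conf_def fun_eq_iff)
qed

definition fin :: "pth \<Rightarrow> nat \<Rightarrow> nat" where
  "fin \<gamma> a = inv bp (pathfinish \<gamma> a)"

lemma rep_fin: "pbraid_rep A \<gamma> \<Longrightarrow> a \<in> A \<Longrightarrow> pathfinish \<gamma> a = bp (fin \<gamma> a)"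
  unfolding pbraid_rep_def fin_def by (metis f_inv_into_f)

lemma rep_fin_inj: "pbraid_rep A \<gamma> \<Longrightarrow> inj_on (fin \<gamma>) A"
proof (rule inj_onI)
  fix a b assume r: "pbraid_rep A \<gamma>" and ab: "a \<in> A" "b \<in> A" "fin \<gamma> a = fin \<gamma> b"
  then have "pathfinish \<gamma> a = pathfinish \<gamma> b" using rep_fin by metis
  moreover have "inj_on (pathfinish \<gamma>) A" using rep_finish_conf[OF r] by (simp add: conf_def)
  ultimately show "a = b" using ab by (auto dest: inj_onD)
qed

lemma rl_match:
  assumes "pbraid_rep A \<gamma>" "pbraid_rep B \<delta>" "\<And>b. b \<in> X \<Longrightarrow> h b \<in> A \<and> fin \<gamma> (h b) \<in> B"
  shows "pathfinish (rl h X \<circ> \<gamma>) = pathstart (rl (fin \<gamma> \<circ> h) X \<circ> \<delta>)"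
proof -
  have "pathfinish \<gamma> (h b) = base B (fin \<gamma> (h b))" if "b \<in> X" for b
    using assms(3)[OF that] rep_fin[OF assms(1)] by (simp add: base_def)
  moreover have "pathstart \<delta> = base B" using assms(2) by (simp add: pbraid_rep_def)
  ultimately show ?thesis unfolding pathfinish_compose pathstart_compose
    by (auto simp: rl_def fun_eq_iff)
qed

lemma pclass_self: "pbraid_rep A \<gamma> \<Longrightarrow> \<gamma> \<in> pclass \<gamma>"
  by (auto simp: pclass_def pbraid_rep_def)

lemma hom_rep: "pbraid_rep A \<gamma> \<Longrightarrow> homotopic_paths (conf A) \<gamma> \<delta> \<Longrightarrow> pbraid_rep A \<delta>"
  unfolding pbraid_rep_def
  using homotopic_paths_imp_path homotopic_paths_imp_subset homotopic_paths_imp_pathstart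
    homotopic_paths_imp_pathfinish by metis

lemma pclass_memD: "\<delta> \<in> pclass \<gamma> \<Longrightarrow> pbraid_rep A \<gamma> \<Longrightarrow> homotopic_paths (conf A) \<gamma> \<delta>"
  unfolding pclass_def using rep_unique by blast

lemma pclass_eqI: "pbraid_rep A \<gamma> \<Longrightarrow> homotopic_paths (conf A) \<gamma> \<delta> \<Longrightarrow> pclass \<delta> = pclass \<gamma>"
proof -
  assume r: "pbraid_rep A \<gamma>" and h: "homotopic_paths (conf A) \<gamma> \<delta>"
  have r': "pbraid_rep A \<delta>" by (rule hom_rep[OF r h])
  show ?thesis
  proof (rule set_eqI)
    fix \<epsilon>
    have "\<epsilon> \<in> pclass \<delta> \<longleftrightarrow> homotopic_paths (conf A) \<delta> \<epsilon>"
      using r' pclass_memD unfolding pclass_def by blast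
    also have "\<dots> \<longleftrightarrow> homotopic_paths (conf A) \<gamma> \<epsilon>"
      using h homotopic_paths_trans homotopic_paths_sym by metis
    also have "\<dots> \<longleftrightarrow> \<epsilon> \<in> pclass \<gamma>"
      using r pclass_memD unfolding pclass_def by blast
    finally show "\<epsilon> \<in> pclass \<delta> \<longleftrightarrow> \<epsilon> \<in> pclass \<gamma>" .
  qed
qed

lemma pclass_eq_rep:
  assumes r1: "pbraid_rep A \<gamma>" and r2: "pbraid_rep A' \<psi>" and e: "pclass \<gamma> = pclass \<psi>"
  shows "A = A'" "fin \<gamma> ` A = fin \<psi> ` A'"
proof -
  have "\<psi> \<in> pclass \<gamma>" using pclass_self[OF r2] e by simp
  then have h: "homotopic_paths (conf A) \<gamma> \<psi>" using pclass_memD[OF _ r1] by blast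
  have "pbraid_rep A \<psi>" by (rule hom_rep[OF r1 h])
  then show AA: "A = A'" using rep_unique r2 by blast
  have "pathfinish \<gamma> = pathfinish \<psi>" using homotopic_paths_imp_pathfinish[OF h] .
  then have "fin \<gamma> = fin \<psi>" by (simp add: fin_def fun_eq_iff)
  then show "fin \<gamma> ` A = fin \<psi> ` A'" using AA by simp
qed

lemma pcomp_eq: "pcomp \<gamma> \<delta> = (rl id (pcomp_dom \<gamma> \<delta>) \<circ> \<gamma>) +++ (rl (fin \<gamma>) (pcomp_dom \<gamma> \<delta>) \<circ> \<delta>)"
  unfolding pcomp_def joinpaths_def rl_def fin_def by (simp add: fun_eq_iff)

lemma pcomp_dom_iff: "pbraid_rep A \<gamma> \<Longrightarrow> pbraid_rep B \<delta> \<Longrightarrow>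
   a \<in> pcomp_dom \<gamma> \<delta> \<longleftrightarrow> a \<in> A \<and> fin \<gamma> a \<in> B"
proof -
  assume r1: "pbraid_rep A \<gamma>" and r2: "pbraid_rep B \<delta>"
  show ?thesis
  proof (cases "a \<in> A")
    case True
    then show ?thesis unfolding pcomp_dom_def
      using rep_start_iff[OF r1] rep_start_iff[OF r2] rep_fin[OF r1 True] by auto
  next
    case False
    then show ?thesis unfolding pcomp_dom_def using rep_start_iff[OF r1] by auto
  qed
qed

lemma fin_pcomp: "a \<in> pcomp_dom \<gamma> \<delta> \<Longrightarrow> fin (pcomp \<gamma> \<delta>) a = fin \<delta> (fin \<gamma> a)"
  unfolding fin_def[of "pcomp \<gamma> \<delta>"] pcomp_eq[of \<gamma> \<delta>] pathfinish_join
  by (simp add: pathfinish_compose rl_def fin_def)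

lemma pcomp_rep:
  assumes r1: "pbraid_rep A \<gamma>" and r2: "pbraid_rep B \<delta>"
  shows "pbraid_rep (pcomp_dom \<gamma> \<delta>) (pcomp \<gamma> \<delta>)"
proof -
  let ?D = "pcomp_dom \<gamma> \<delta>"
  have Dfin: "a \<in> ?D \<Longrightarrow> a \<in> A \<and> fin \<gamma> a \<in> B" for a using pcomp_dom_iff[OF r1 r2] by blast
  then have DA: "?D \<subseteq> A" by blast
  have inj2: "inj_on (fin \<gamma>) ?D" using inj_on_subset[OF rep_fin_inj[OF r1] DA] .
  have match: "pathfinish (rl id ?D \<circ> \<gamma>) = pathstart (rl (fin \<gamma>) ?D \<circ> \<delta>)"
    using rl_match[OF r1 r2, of ?D id] Dfin by simp
  have i1: "path_image (rl id ?D \<circ> \<gamma>) \<subseteq> conf ?D"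
    using rl_img[OF r1, of id ?D] DA by simp
  have i2: "path_image (rl (fin \<gamma>) ?D \<circ> \<delta>) \<subseteq> conf ?D"
    using rl_img[OF r2 inj2] Dfin by blast
  have st: "pathstart (pcomp \<gamma> \<delta>) = base ?D"
    using r1 DA unfolding pcomp_eq pathstart_join pathstart_compose
    by (auto simp: rl_def fun_eq_iff pbraid_rep_def base_def)
  have fi: "\<forall>a\<in>?D. pathfinish (pcomp \<gamma> \<delta>) a \<in> range bp"
    using r2 Dfin unfolding pcomp_eq pathfinish_join pathfinish_compose
    by (auto simp: rl_def pbraid_rep_def)
  have "finite ?D" using r1 DA finite_subset by (auto simp: pbraid_rep_def)
  moreover have "path (pcomp \<gamma> \<delta>)"
    unfolding pcomp_eq using rl_path[OF r1] rl_path[OF r2] match by simp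
  moreover have "path_image (pcomp \<gamma> \<delta>) \<subseteq> conf ?D"
    unfolding pcomp_eq using path_image_join_subset i1 i2 by blast
  ultimately show ?thesis
    using st fi by (simp add: pbraid_rep_def)
qed

lemma pcomp_hom:
  assumes r1: "pbraid_rep A \<gamma>" and r2: "pbraid_rep B \<delta>"
    and h1: "homotopic_paths (conf A) \<gamma> \<gamma>'" and h2: "homotopic_paths (conf B) \<delta> \<delta>'"
  shows "homotopic_paths (conf (pcomp_dom \<gamma> \<delta>)) (pcomp \<gamma> \<delta>) (pcomp \<gamma>' \<delta>')"
proof -
  let ?D = "pcomp_dom \<gamma> \<delta>"
  have D: "pcomp_dom \<gamma>' \<delta>' = ?D"
    using homotopic_paths_imp_pathstart[OF h1] homotopic_paths_imp_pathfinish[OF h1]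
      homotopic_paths_imp_pathstart[OF h2] by (simp add: pcomp_dom_def)
  have F: "fin \<gamma>' = fin \<gamma>" using homotopic_paths_imp_pathfinish[OF h1] unfolding fin_def by simp
  have Dfin: "a \<in> ?D \<Longrightarrow> a \<in> A \<and> fin \<gamma> a \<in> B" for a using pcomp_dom_iff[OF r1 r2] by blast
  then have DA: "?D \<subseteq> A" by blast
  have inj2: "inj_on (fin \<gamma>) ?D" using inj_on_subset[OF rep_fin_inj[OF r1] DA] .
  have a: "homotopic_paths (conf ?D) (rl id ?D \<circ> \<gamma>) (rl id ?D \<circ> \<gamma>')"
    by (rule homotopic_paths_continuous_image[OF h1 rl_cont])
      (use DA in \<open>auto intro!: rl_conf[of id _ A]\<close>)
  have b: "homotopic_paths (conf ?D) (rl (fin \<gamma>) ?D \<circ> \<delta>) (rl (fin \<gamma>) ?D \<circ> \<delta>')"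
    by (rule homotopic_paths_continuous_image[OF h2 rl_cont])
      (use inj2 Dfin in \<open>auto intro!: rl_conf[of "fin \<gamma>" _ B]\<close>)
  have match: "pathfinish (rl id ?D \<circ> \<gamma>) = pathstart (rl (fin \<gamma>) ?D \<circ> \<delta>)"
    using rl_match[OF r1 r2, of ?D id] Dfin by simp
  show ?thesis
    unfolding pcomp_eq D F using homotopic_paths_join[OF a b match] by simp
qed

lemma pmult_pclass:
  assumes r1: "pbraid_rep A \<gamma>" and r2: "pbraid_rep B \<delta>"
  shows "pclass \<gamma> \<cdot>\<^sub>p pclass \<delta> = pclass (pcomp \<gamma> \<delta>)"
proof -
  have "pclass (pcomp \<gamma>' \<delta>') = pclass (pcomp \<gamma> \<delta>)" if "\<gamma>' \<in> pclass \<gamma>" "\<delta>' \<in> pclass \<delta>" for \<gamma>' \<delta>'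
    using pclass_eqI[OF pcomp_rep[OF r1 r2] pcomp_hom[OF r1 r2]] pclass_memD that r1 r2 by blast
  then have "{pclass (pcomp \<gamma>' \<delta>') | \<gamma>' \<delta>'. \<gamma>' \<in> pclass \<gamma> \<and> \<delta>' \<in> pclass \<delta>} = {pclass (pcomp \<gamma> \<delta>)}"
    using pclass_self[OF r1] pclass_self[OF r2] by blast
  then show ?thesis unfolding pmult_def by simp
qed

text \<open>The configuration spaces are not vector spaces, so the library's path-algebra facts,
  stated with constant linear paths, are first transported from the unit interval along a path.\<close>

lemma unit_linepath: "linepath (0::real) 1 = id"
  by (simp add: linepath_def fun_eq_iff)

lemma path_image_unit_linepath: "path_image (linepath (0::real) 1) \<subseteq> {0..1}"
  by (simp add: unit_linepath path_image_def)

lemma homotopic_paths_along: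
  assumes "homotopic_paths {0..1} f g" "path p" "path_image p \<subseteq> S"
  shows "homotopic_paths S (p \<circ> f) (p \<circ> g)"
  using homotopic_paths_continuous_image[OF assms(1)] assms(2,3)
  by (auto simp: path_def path_image_def)

lemma homotopic_paths_const_join:
  assumes "path p" "path_image p \<subseteq> S"
  shows "homotopic_paths S ((\<lambda>t. pathstart p) +++ p) p"
proof -
  let ?u = "linepath (0::real) 1"
  have "homotopic_paths {0..1} (linepath 0 0 +++ ?u) ?u"
    using homotopic_paths_lid[of ?u "{0..1}"] path_image_unit_linepath by simp
  from homotopic_paths_along[OF this assms] show ?thesis
    unfolding path_compose_join by (simp add: unit_linepath linepath_refl comp_def pathstart_def)
qed

lemma homotopic_paths_join_const:
  assumes "path p" "path_image p \<subseteq> S"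
  shows "homotopic_paths S (p +++ (\<lambda>t. pathfinish p)) p"
proof -
  let ?u = "linepath (0::real) 1"
  have "homotopic_paths {0..1} (?u +++ linepath 1 1) ?u"
    using homotopic_paths_rid[of ?u "{0..1}"] path_image_unit_linepath by simp
  from homotopic_paths_along[OF this assms] show ?thesis
    unfolding path_compose_join by (simp add: unit_linepath linepath_refl comp_def pathfinish_def)
qed

lemma homotopic_paths_join_reverse:
  assumes "path p" "path_image p \<subseteq> S"
  shows "homotopic_paths S (p +++ reversepath p) (\<lambda>t. pathstart p)"
proof -
  let ?u = "linepath (0::real) 1"
  have "homotopic_paths {0..1} (?u +++ reversepath ?u) (linepath 0 0)"
    using homotopic_paths_rinv[of ?u "{0..1}"] path_image_unit_linepath by simp
  from homotopic_paths_along[OF this assms] show ?thesis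
    unfolding path_compose_join path_compose_reversepath
    by (simp add: unit_linepath linepath_refl comp_def pathstart_def)
qed

lemma homotopic_paths_reverse_join:
  assumes "path p" "path_image p \<subseteq> S"
  shows "homotopic_paths S (reversepath p +++ p) (\<lambda>t. pathfinish p)"
  using homotopic_paths_join_reverse[of "reversepath p" S] assms by simp

lemma pcomp_assoc:
  assumes r1: "pbraid_rep A \<gamma>" and r2: "pbraid_rep B \<delta>" and r3: "pbraid_rep C \<epsilon>"
  shows "pclass (pcomp (pcomp \<gamma> \<delta>) \<epsilon>) = pclass (pcomp \<gamma> (pcomp \<delta> \<epsilon>))"
proof -
  define D1 where "D1 = pcomp_dom \<gamma> \<delta>"
  define E1 where "E1 = pcomp_dom \<delta> \<epsilon>"
  define D where "D = pcomp_dom (pcomp \<gamma> \<delta>) \<epsilon>"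
  have r12: "pbraid_rep D1 (pcomp \<gamma> \<delta>)" unfolding D1_def by (rule pcomp_rep[OF r1 r2])
  have r23: "pbraid_rep E1 (pcomp \<delta> \<epsilon>)" unfolding E1_def by (rule pcomp_rep[OF r2 r3])
  have D1: "a \<in> D1 \<longleftrightarrow> a \<in> A \<and> fin \<gamma> a \<in> B" for a unfolding D1_def using pcomp_dom_iff[OF r1 r2] .
  have E1: "a \<in> E1 \<longleftrightarrow> a \<in> B \<and> fin \<delta> a \<in> C" for a unfolding E1_def using pcomp_dom_iff[OF r2 r3] .
  have fp: "a \<in> D1 \<Longrightarrow> fin (pcomp \<gamma> \<delta>) a = fin \<delta> (fin \<gamma> a)" for a
    unfolding D1_def by (rule fin_pcomp)
  have D: "a \<in> D \<longleftrightarrow> a \<in> A \<and> fin \<gamma> a \<in> B \<and> fin \<delta> (fin \<gamma> a) \<in> C" for a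
    using pcomp_dom_iff[OF r12 r3, of a] D1 fp[of a] unfolding D_def by auto
  have D': "pcomp_dom \<gamma> (pcomp \<delta> \<epsilon>) = D"
    using pcomp_dom_iff[OF r1 r23] D E1 by auto
  have DD1: "D \<subseteq> D1" using D D1 by auto
  \<comment> \<open>both composites are the same three pieces, bracketed differently\<close>
  let ?p = "rl id D \<circ> \<gamma>" and ?q = "rl (fin \<gamma> \<circ> id) D \<circ> \<delta>"
    and ?r = "rl (fin \<delta> \<circ> (fin \<gamma> \<circ> id)) D \<circ> \<epsilon>"
  have L: "pcomp (pcomp \<gamma> \<delta>) \<epsilon> = (?p +++ ?q) +++ ?r"
  proof -
    have "rl id D \<circ> pcomp \<gamma> \<delta> = ?p +++ ?q"
      unfolding pcomp_eq[of \<gamma> \<delta>, folded D1_def] path_compose_join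
      using DD1 by (simp add: rl_rl_path subset_iff)
    moreover have "rl (fin (pcomp \<gamma> \<delta>)) D = rl (fin \<delta> \<circ> (fin \<gamma> \<circ> id)) D"
      by (rule rl_cong) (use DD1 fp in auto)
    ultimately show ?thesis using pcomp_eq[of "pcomp \<gamma> \<delta>" \<epsilon>, folded D_def] by simp
  qed
  have R: "pcomp \<gamma> (pcomp \<delta> \<epsilon>) = ?p +++ (?q +++ ?r)"
  proof -
    have "\<And>b. b \<in> D \<Longrightarrow> fin \<gamma> b \<in> E1" using D E1 by auto
    then have "rl (fin \<gamma>) D \<circ> pcomp \<delta> \<epsilon> = ?q +++ ?r"
      unfolding pcomp_eq[of \<delta> \<epsilon>, folded E1_def] path_compose_join by (simp add: rl_rl_path)
    then show ?thesis using pcomp_eq[of \<gamma> "pcomp \<delta> \<epsilon>"] D' by simp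
  qed
  have injg: "inj_on (fin \<gamma>) D" using inj_on_subset[OF rep_fin_inj[OF r1]] D by blast
  have injd: "inj_on (fin \<delta>) (fin \<gamma> ` D)" using inj_on_subset[OF rep_fin_inj[OF r2]] D by blast
  have ip: "path_image ?p \<subseteq> conf D" by (rule rl_img[OF r1]) (use D in auto)
  have iq: "path_image ?q \<subseteq> conf D" by (rule rl_img[OF r2]) (use D injg in auto)
  have ir: "path_image ?r \<subseteq> conf D"
    by (rule rl_img[OF r3]) (use D injg injd in \<open>auto intro: comp_inj_on\<close>)
  have m1: "pathfinish ?p = pathstart ?q" by (rule rl_match[OF r1 r2]) (use D in auto)
  have m2: "pathfinish ?q = pathstart ?r"
    using rl_match[OF r2 r3, of D "fin \<gamma> \<circ> id"] D by (simp add: o_assoc)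
  have "homotopic_paths (conf D) (?p +++ (?q +++ ?r)) ((?p +++ ?q) +++ ?r)"
    by (rule homotopic_paths_assoc) (use rl_path[OF r1] rl_path[OF r2] rl_path[OF r3] ip iq ir m1 m2 in auto)
  then show ?thesis
    using pclass_eqI[OF pcomp_rep[OF r12 r3]] L R homotopic_paths_sym unfolding D_def by metis
qed

definition idp :: "nat set \<Rightarrow> pth" where "idp A = (\<lambda>t. base A)"

lemma rep_idp: "finite A \<Longrightarrow> pbraid_rep A (idp A)"
  using base_conf[of A]
  by (auto simp: pbraid_rep_def idp_def path_def pathstart_def pathfinish_def base_def)

lemma fin_idp: "a \<in> A \<Longrightarrow> fin (idp A) a = a"
  by (simp add: fin_def idp_def pathfinish_def base_def)

lemma pcomp_lid:
  assumes r: "pbraid_rep A \<gamma>"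
  shows "pclass (pcomp (idp A) \<gamma>) = pclass \<gamma>"
proof -
  have ri: "pbraid_rep A (idp A)" using r rep_idp by (simp add: pbraid_rep_def)
  have D: "pcomp_dom (idp A) \<gamma> = A" using pcomp_dom_iff[OF ri r] fin_idp by auto
  let ?p = "rl id A \<circ> \<gamma>"
  have e1: "rl id A \<circ> idp A = (\<lambda>t. pathstart ?p)"
    using r by (auto simp: idp_def rl_def fun_eq_iff pathstart_def pbraid_rep_def base_def)
  have e2: "rl (fin (idp A)) A = rl id A" by (rule rl_cong) (simp add: fin_idp)
  have "homotopic_paths (conf A) (pcomp (idp A) \<gamma>) ?p"
    unfolding pcomp_eq D e1 e2
    by (rule homotopic_paths_const_join) (auto simp: rl_path[OF r] rl_img[OF r])
  then have "homotopic_paths (conf A) (pcomp (idp A) \<gamma>) \<gamma>"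
    using rl_id_hom[OF r] homotopic_paths_trans by blast
  then show ?thesis
    using pclass_eqI[OF pcomp_rep[OF ri r]] D homotopic_paths_sym by metis
qed

lemma pcomp_rid:
  assumes r: "pbraid_rep A \<gamma>" and fB: "finite B" and sub: "fin \<gamma> ` A \<subseteq> B"
  shows "pclass (pcomp \<gamma> (idp B)) = pclass \<gamma>"
proof -
  have ri: "pbraid_rep B (idp B)" by (rule rep_idp[OF fB])
  have D: "pcomp_dom \<gamma> (idp B) = A" using pcomp_dom_iff[OF r ri] sub by auto
  let ?p = "rl id A \<circ> \<gamma>"
  have e1: "rl (fin \<gamma>) A \<circ> idp B = (\<lambda>t. pathfinish ?p)"
    using sub rep_fin[OF r] rep_finish_conf[OF r]
    by (auto simp: idp_def rl_def fun_eq_iff pathfinish_def base_def conf_def)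
  have "homotopic_paths (conf A) (pcomp \<gamma> (idp B)) ?p"
    unfolding pcomp_eq D e1
    by (rule homotopic_paths_join_const) (auto simp: rl_path[OF r] rl_img[OF r])
  then have "homotopic_paths (conf A) (pcomp \<gamma> (idp B)) \<gamma>"
    using rl_id_hom[OF r] homotopic_paths_trans by blast
  then show ?thesis
    using pclass_eqI[OF pcomp_rep[OF r ri]] D homotopic_paths_sym by metis
qed

text \<open>Running a braid backwards, with the strings relabelled by where they end, inverts it.\<close>

definition rinv :: "nat set \<Rightarrow> pth \<Rightarrow> pth" where
  "rinv A \<gamma> = rl (the_inv_into A (fin \<gamma>)) (fin \<gamma> ` A) \<circ> reversepath \<gamma>"

lemma rep_rinv:
  assumes r: "pbraid_rep A \<gamma>"
  shows "pbraid_rep (fin \<gamma> ` A) (rinv A \<gamma>)"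
proof -
  let ?F = "fin \<gamma> ` A" and ?g = "the_inv_into A (fin \<gamma>)"
  have inj: "inj_on (fin \<gamma>) A" by (rule rep_fin_inj[OF r])
  have ig: "inj_on ?g ?F" using inj by (rule inj_on_the_inv_into)
  have gA: "?g ` ?F \<subseteq> A" using inj by (auto simp: the_inv_into_f_f)
  have pth: "path (rinv A \<gamma>)"
    using r unfolding rinv_def pbraid_rep_def
    by (metis continuous_on_subset path_continuous_image path_reversepath rl_cont subset_UNIV)
  have img: "path_image (rinv A \<gamma>) \<subseteq> conf ?F"
    using r ig gA unfolding rinv_def path_image_compose path_image_reversepath pbraid_rep_def
    by (auto intro!: rl_conf[of ?g ?F A])
  have st: "pathstart (rinv A \<gamma>) = base ?F"
    using inj rep_fin[OF r]
    by (auto simp: rinv_def pathstart_compose rl_def base_def fun_eq_iff the_inv_into_f_f)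
  have fi: "\<forall>c\<in>?F. pathfinish (rinv A \<gamma>) c \<in> range bp"
    using r inj
    by (auto simp: rinv_def pathfinish_compose rl_def pbraid_rep_def base_def the_inv_into_f_f)
  show ?thesis using r pth img st fi by (auto simp: pbraid_rep_def)
qed

lemma fin_rinv:
  assumes r: "pbraid_rep A \<gamma>" and c: "c \<in> fin \<gamma> ` A"
  shows "fin (rinv A \<gamma>) c = the_inv_into A (fin \<gamma>) c"
proof -
  have inj: "inj_on (fin \<gamma>) A" by (rule rep_fin_inj[OF r])
  show ?thesis unfolding fin_def[of "rinv A \<gamma>"] using r c inj
    by (auto simp: rinv_def pathfinish_compose rl_def pbraid_rep_def base_def the_inv_into_f_f)
qed

lemma pcomp_rinv:
  assumes r: "pbraid_rep A \<gamma>"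
  shows "pclass (pcomp \<gamma> (rinv A \<gamma>)) = pclass (idp A)"
proof -
  let ?g = "the_inv_into A (fin \<gamma>)"
  have inj: "inj_on (fin \<gamma>) A" by (rule rep_fin_inj[OF r])
  have ri: "pbraid_rep (fin \<gamma> ` A) (rinv A \<gamma>)" by (rule rep_rinv[OF r])
  have D: "pcomp_dom \<gamma> (rinv A \<gamma>) = A" using pcomp_dom_iff[OF r ri] by auto
  let ?p = "rl id A \<circ> \<gamma>"
  have e2: "rl (fin \<gamma>) A \<circ> rinv A \<gamma> = reversepath ?p"
  proof -
    have "rl (fin \<gamma>) A \<circ> rinv A \<gamma> = rl (?g \<circ> fin \<gamma>) A \<circ> reversepath \<gamma>"
      unfolding rinv_def by (rule rl_rl_path) auto
    also have "rl (?g \<circ> fin \<gamma>) A = rl id A" by (rule rl_cong) (simp add: inj the_inv_into_f_f)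
    finally show ?thesis by (simp add: reversepath_def o_def)
  qed
  have ps: "(\<lambda>t. pathstart ?p) = idp A"
    using r by (auto simp: pathstart_compose rl_def pbraid_rep_def base_def fun_eq_iff idp_def)
  have "homotopic_paths (conf A) (pcomp \<gamma> (rinv A \<gamma>)) (idp A)"
    unfolding pcomp_eq[of \<gamma> "rinv A \<gamma>"] D e2 ps[symmetric]
    by (rule homotopic_paths_join_reverse) (auto simp: rl_path[OF r] rl_img[OF r])
  then show ?thesis
    using pclass_eqI[OF pcomp_rep[OF r ri]] D by metis
qed

lemma pcomp_linv:
  assumes r: "pbraid_rep A \<gamma>"
  shows "pclass (pcomp (rinv A \<gamma>) \<gamma>) = pclass (idp (fin \<gamma> ` A))"
proof -
  let ?F = "fin \<gamma> ` A" and ?g = "the_inv_into A (fin \<gamma>)"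
  have inj: "inj_on (fin \<gamma>) A" by (rule rep_fin_inj[OF r])
  have ri: "pbraid_rep ?F (rinv A \<gamma>)" by (rule rep_rinv[OF r])
  have ig: "inj_on ?g ?F" using inj by (rule inj_on_the_inv_into)
  have gA: "?g ` ?F \<subseteq> A" using inj by (auto simp: the_inv_into_f_f)
  have D: "pcomp_dom (rinv A \<gamma>) \<gamma> = ?F"
    using pcomp_dom_iff[OF ri r] fin_rinv[OF r] inj by (auto simp: the_inv_into_f_f)
  let ?q = "rl ?g ?F \<circ> \<gamma>"
  have e1: "rl id ?F \<circ> rinv A \<gamma> = reversepath ?q"
  proof -
    have "rl id ?F \<circ> rinv A \<gamma> = rl (?g \<circ> id) ?F \<circ> reversepath \<gamma>"
      unfolding rinv_def by (rule rl_rl_path) auto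
    then show ?thesis by (simp add: reversepath_def o_def)
  qed
  have e2: "rl (fin (rinv A \<gamma>)) ?F = rl ?g ?F" by (rule rl_cong) (simp add: fin_rinv[OF r])
  have pf: "(\<lambda>t. pathfinish ?q) = idp ?F"
    using inj rep_fin[OF r]
    by (auto simp: pathfinish_compose rl_def base_def fun_eq_iff the_inv_into_f_f idp_def)
  have "homotopic_paths (conf ?F) (pcomp (rinv A \<gamma>) \<gamma>) (idp ?F)"
    unfolding pcomp_eq[of "rinv A \<gamma>" \<gamma>] D e1 e2 pf[symmetric]
    by (rule homotopic_paths_reverse_join) (use ig gA in \<open>auto simp: rl_path[OF r] rl_img[OF r]\<close>)
  then show ?thesis
    using pclass_eqI[OF pcomp_rep[OF ri r]] D by metis
qed

section \<open>Braids between sets of labels\<close>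

definition pbraid_between :: "nat set \<Rightarrow> nat set \<Rightarrow> pth set \<Rightarrow> bool" where
  "pbraid_between A B X \<longleftrightarrow> (\<exists>\<gamma>. pbraid_rep A \<gamma> \<and> X = pclass \<gamma> \<and> fin \<gamma> ` A = B)"

definition pid :: "nat set \<Rightarrow> pth set" where
  "pid A = pclass (idp A)"

lemma pbraid_between_unique:
  assumes "pbraid_between A B X" "pbraid_between A' B' X"
  shows "A = A' \<and> B = B'"
proof -
  obtain \<gamma> \<psi> where "pbraid_rep A \<gamma>" "X = pclass \<gamma>" "fin \<gamma> ` A = B"
    "pbraid_rep A' \<psi>" "X = pclass \<psi>" "fin \<psi> ` A' = B'"
    using assms unfolding pbraid_between_def by blast
  then show ?thesis using pclass_eq_rep[of A \<gamma> A' \<psi>] by simp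
qed

lemma pbraid_between_finite: "pbraid_between A B X \<Longrightarrow> finite A \<and> finite B"
  by (auto simp: pbraid_between_def pbraid_rep_def)

lemma pbraid_between_card: "pbraid_between A B X \<Longrightarrow> card B = card A"
  unfolding pbraid_between_def using rep_fin_inj card_image by auto

lemma pbraid_between_mult:
  assumes "pbraid_between A B X" "pbraid_between B C Y"
  shows "pbraid_between A C (X \<cdot>\<^sub>p Y)"
proof -
  obtain \<gamma> \<delta> where r1: "pbraid_rep A \<gamma>" "X = pclass \<gamma>" "fin \<gamma> ` A = B"
    and r2: "pbraid_rep B \<delta>" "Y = pclass \<delta>" "fin \<delta> ` B = C"
    using assms unfolding pbraid_between_def by blast
  have D: "pcomp_dom \<gamma> \<delta> = A" using pcomp_dom_iff[OF r1(1) r2(1)] r1(3) by auto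
  have "fin (pcomp \<gamma> \<delta>) ` A = fin \<delta> ` fin \<gamma> ` A"
    unfolding image_image using fin_pcomp[of _ \<gamma> \<delta>] D by (intro image_cong) auto
  then have "fin (pcomp \<gamma> \<delta>) ` A = C" using r1(3) r2(3) by simp
  then show ?thesis
    unfolding pbraid_between_def r1(2) r2(2) pmult_pclass[OF r1(1) r2(1)]
    using pcomp_rep[OF r1(1) r2(1)] D by auto
qed

lemma pbraid_assoc:
  assumes "pbraid_between A B X" "pbraid_between A' B' Y" "pbraid_between A'' B'' Z"
  shows "(X \<cdot>\<^sub>p Y) \<cdot>\<^sub>p Z = X \<cdot>\<^sub>p (Y \<cdot>\<^sub>p Z)"
proof -
  obtain \<gamma> \<delta> \<epsilon> where r1: "pbraid_rep A \<gamma>" "X = pclass \<gamma>" and r2: "pbraid_rep A' \<delta>" "Y = pclass \<delta>"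
    and r3: "pbraid_rep A'' \<epsilon>" "Z = pclass \<epsilon>"
    using assms unfolding pbraid_between_def by blast
  have "(X \<cdot>\<^sub>p Y) \<cdot>\<^sub>p Z = pclass (pcomp (pcomp \<gamma> \<delta>) \<epsilon>)"
    unfolding r1(2) r2(2) r3(2) pmult_pclass[OF r1(1) r2(1)]
    using pmult_pclass[OF pcomp_rep[OF r1(1) r2(1)] r3(1)] .
  also have "\<dots> = pclass (pcomp \<gamma> (pcomp \<delta> \<epsilon>))" by (rule pcomp_assoc[OF r1(1) r2(1) r3(1)])
  also have "\<dots> = X \<cdot>\<^sub>p (Y \<cdot>\<^sub>p Z)"
    unfolding r1(2) r2(2) r3(2) pmult_pclass[OF r2(1) r3(1)]
    using pmult_pclass[OF r1(1) pcomp_rep[OF r2(1) r3(1)]] by simp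
  finally show ?thesis .
qed

lemma pbraid_pid_mult:
  assumes "pbraid_between A B X"
  shows "pid A \<cdot>\<^sub>p X = X" "X \<cdot>\<^sub>p pid B = X"
proof -
  obtain \<gamma> where r: "pbraid_rep A \<gamma>" "X = pclass \<gamma>" "fin \<gamma> ` A = B"
    using assms unfolding pbraid_between_def by blast
  have fA: "finite A" and fB: "finite B" using pbraid_between_finite[OF assms] by auto
  show "pid A \<cdot>\<^sub>p X = X"
    unfolding pid_def r(2) pmult_pclass[OF rep_idp[OF fA] r(1)] by (rule pcomp_lid[OF r(1)])
  show "X \<cdot>\<^sub>p pid B = X"
    unfolding pid_def r(2) pmult_pclass[OF r(1) rep_idp[OF fB]] by (rule pcomp_rid[OF r(1) fB]) (simp add: r(3))
qed

lemma pbraid_inverse: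
  assumes "pbraid_between A B X"
  obtains Y where "pbraid_between B A Y" "X \<cdot>\<^sub>p Y = pid A" "Y \<cdot>\<^sub>p X = pid B"
proof -
  obtain \<gamma> where r: "pbraid_rep A \<gamma>" "X = pclass \<gamma>" and B: "B = fin \<gamma> ` A"
    using assms unfolding pbraid_between_def by blast
  have ri: "pbraid_rep B (rinv A \<gamma>)" unfolding B by (rule rep_rinv[OF r(1)])
  have inj: "inj_on (fin \<gamma>) A" by (rule rep_fin_inj[OF r(1)])
  have "fin (rinv A \<gamma>) ` B = A"
    unfolding B using fin_rinv[OF r(1)] inj by (simp add: image_image the_inv_into_f_f)
  then have "pbraid_between B A (pclass (rinv A \<gamma>))"
    unfolding pbraid_between_def using ri by blast
  moreover have "X \<cdot>\<^sub>p pclass (rinv A \<gamma>) = pid A"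
    unfolding r(2) pid_def pmult_pclass[OF r(1) ri] by (rule pcomp_rinv[OF r(1)])
  moreover have "pclass (rinv A \<gamma>) \<cdot>\<^sub>p X = pid B"
    unfolding r(2) pid_def pmult_pclass[OF ri r(1)] B by (rule pcomp_linv[OF r(1)])
  ultimately show ?thesis by (rule that)
qed

lemma pbraid_sandwich_bij:
  assumes P: "pbraid_between A K P" and Q: "pbraid_between K B Q"
  shows "bij_betw (\<lambda>x. P \<cdot>\<^sub>p x \<cdot>\<^sub>p Q) {x. pbraid_between K K x} {\<beta>. pbraid_between A B \<beta>}"
proof -
  obtain P' where P': "pbraid_between K A P'" "P \<cdot>\<^sub>p P' = pid A" "P' \<cdot>\<^sub>p P = pid K"
    using pbraid_inverse[OF P] by blast
  obtain Q' where Q': "pbraid_between B K Q'" "Q \<cdot>\<^sub>p Q' = pid K" "Q' \<cdot>\<^sub>p Q = pid B"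
    using pbraid_inverse[OF Q] by blast
  have into: "pbraid_between A B (P \<cdot>\<^sub>p x \<cdot>\<^sub>p Q)" if "pbraid_between K K x" for x
    using pbraid_between_mult[OF pbraid_between_mult[OF P that] Q] .
  have recover: "P' \<cdot>\<^sub>p (P \<cdot>\<^sub>p x \<cdot>\<^sub>p Q \<cdot>\<^sub>p Q') = x" if x: "pbraid_between K K x" for x
  proof -
    have Px: "pbraid_between A K (P \<cdot>\<^sub>p x)" by (rule pbraid_between_mult[OF P x])
    have "P \<cdot>\<^sub>p x \<cdot>\<^sub>p Q \<cdot>\<^sub>p Q' = P \<cdot>\<^sub>p x \<cdot>\<^sub>p pid K"
      using pbraid_assoc[OF Px Q Q'(1)] Q'(2) by simp
    also have "\<dots> = P \<cdot>\<^sub>p x" by (rule pbraid_pid_mult(2)[OF Px])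
    finally have "P' \<cdot>\<^sub>p (P \<cdot>\<^sub>p x \<cdot>\<^sub>p Q \<cdot>\<^sub>p Q') = P' \<cdot>\<^sub>p P \<cdot>\<^sub>p x"
      using pbraid_assoc[OF P'(1) P x] by simp
    then show ?thesis using P'(3) pbraid_pid_mult(1)[OF x] by simp
  qed
  have onto: "\<beta> = P \<cdot>\<^sub>p (P' \<cdot>\<^sub>p \<beta> \<cdot>\<^sub>p Q') \<cdot>\<^sub>p Q" if \<beta>: "pbraid_between A B \<beta>" for \<beta>
  proof -
    have P'\<beta>: "pbraid_between K B (P' \<cdot>\<^sub>p \<beta>)" by (rule pbraid_between_mult[OF P'(1) \<beta>])
    have "P \<cdot>\<^sub>p (P' \<cdot>\<^sub>p \<beta> \<cdot>\<^sub>p Q') = P \<cdot>\<^sub>p P' \<cdot>\<^sub>p \<beta> \<cdot>\<^sub>p Q'"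
      using pbraid_assoc[OF P P'\<beta> Q'(1)] pbraid_assoc[OF P P'(1) \<beta>] by simp
    also have "\<dots> = \<beta> \<cdot>\<^sub>p Q'" using P'(2) pbraid_pid_mult(1)[OF \<beta>] by simp
    finally have "P \<cdot>\<^sub>p (P' \<cdot>\<^sub>p \<beta> \<cdot>\<^sub>p Q') \<cdot>\<^sub>p Q = \<beta> \<cdot>\<^sub>p Q' \<cdot>\<^sub>p Q" by simp
    also have "\<dots> = \<beta>" using pbraid_assoc[OF \<beta> Q'(1) Q] Q'(3) pbraid_pid_mult(2)[OF \<beta>] by simp
    finally show ?thesis by simp
  qed
  show ?thesis
  proof (rule bij_betw_imageI)
    show "inj_on (\<lambda>x. P \<cdot>\<^sub>p x \<cdot>\<^sub>p Q) {x. pbraid_between K K x}"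
    proof (rule inj_onI)
      fix x y assume "x \<in> {x. pbraid_between K K x}" "y \<in> {x. pbraid_between K K x}"
        and "P \<cdot>\<^sub>p x \<cdot>\<^sub>p Q = P \<cdot>\<^sub>p y \<cdot>\<^sub>p Q"
      then show "x = y" using recover by (metis mem_Collect_eq)
    qed
    show "(\<lambda>x. P \<cdot>\<^sub>p x \<cdot>\<^sub>p Q) ` {x. pbraid_between K K x} = {\<beta>. pbraid_between A B \<beta>}"
    proof (intro equalityI subsetI)
      fix \<beta> assume "\<beta> \<in> {\<beta>. pbraid_between A B \<beta>}"
      then have \<beta>: "pbraid_between A B \<beta>" by simp
      have "pbraid_between K K (P' \<cdot>\<^sub>p \<beta> \<cdot>\<^sub>p Q')"
        using pbraid_between_mult[OF pbraid_between_mult[OF P'(1) \<beta>] Q'(1)] .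
      then show "\<beta> \<in> (\<lambda>x. P \<cdot>\<^sub>p x \<cdot>\<^sub>p Q) ` {x. pbraid_between K K x}"
        using onto[OF \<beta>] by blast
    qed (use into in auto)
  qed
qed

lemma Br_iff: "x \<in> Br k \<longleftrightarrow> pbraid_between {1..k} {1..k} x"
proof
  assume "x \<in> Br k"
  then obtain \<gamma> where r: "pbraid_rep {1..k} \<gamma>" and f: "\<forall>a\<in>{1..k}. pathfinish \<gamma> a \<in> bp ` {1..k}"
    and x: "x = pclass \<gamma>" unfolding Br_def by blast
  have "fin \<gamma> ` {1..k} \<subseteq> {1..k}" using f by (auto simp: fin_def)
  then have "fin \<gamma> ` {1..k} = {1..k}" using endo_inj_surj rep_fin_inj[OF r] by blast
  then show "pbraid_between {1..k} {1..k} x" unfolding pbraid_between_def using r x by blast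
next
  assume "pbraid_between {1..k} {1..k} x"
  then obtain \<gamma> where r: "pbraid_rep {1..k} \<gamma>" "x = pclass \<gamma>" "fin \<gamma> ` {1..k} = {1..k}"
    unfolding pbraid_between_def by blast
  then have "\<forall>a\<in>{1..k}. pathfinish \<gamma> a \<in> bp ` {1..k}" using rep_fin[OF r(1)] by blast
  then show "x \<in> Br k" unfolding Br_def using r by blast
qed

lemma IBr_between:
  assumes "\<beta> \<in> IBr n"
  obtains A B where "A \<subseteq> {1..n}" "B \<subseteq> {1..n}" "pbraid_between A B \<beta>"
proof -
  obtain \<gamma> A where r: "pbraid_rep A \<gamma>" and An: "A \<subseteq> {1..n}"
    and f: "\<forall>a\<in>A. pathfinish \<gamma> a \<in> bp ` {1..n}" and \<beta>: "\<beta> = pclass \<gamma>"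
    using assms unfolding IBr_def by blast
  have "fin \<gamma> ` A \<subseteq> {1..n}" using f by (auto simp: fin_def)
  moreover have "pbraid_between A (fin \<gamma> ` A) \<beta>" unfolding pbraid_between_def using r \<beta> by blast
  ultimately show ?thesis using that An by blast
qed

section \<open>The half twist sigma_i\<close>

definition bpv :: "real \<Rightarrow> real^3" where "bpv \<alpha> = vector [cos \<alpha>, sin \<alpha>, 0]"

definition axial :: "real \<Rightarrow> real^3 \<Rightarrow> real" where "axial m v = v$1 * cos m + v$2 * sin m"

lemma bp_bpv: "bp i = bpv (bp_angle i)" by (simp add: bp_def bpv_def)

lemma vec3_eq: "(v::real^3) = w \<longleftrightarrow> v$1 = w$1 \<and> v$2 = w$2 \<and> v$3 = w$3"
  by (simp add: vec_eq_iff forall_3)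

lemma rot_eq_start: "rot_eq m 0 \<alpha> = bpv \<alpha>"
proof -
  have "cos (\<alpha> - m) * cos m - sin (\<alpha> - m) * sin m = cos \<alpha>" using cos_add[of "\<alpha>-m" m] by simp
  moreover have "cos (\<alpha> - m) * sin m + sin (\<alpha> - m) * cos m = sin \<alpha>" using sin_add[of "\<alpha>-m" m] by simp
  ultimately show ?thesis by (simp add: vec3_eq rot_eq_def bpv_def)
qed

text \<open>The half turn reflects the equator in the axis.\<close>

lemma rot_eq_end: "rot_eq m pi \<alpha> = bpv (2*m - \<alpha>)"
proof -
  have e: "2*m - \<alpha> = m - (\<alpha> - m)" by simp
  have "cos (\<alpha> - m) * cos m + sin (\<alpha> - m) * sin m = cos (2*m - \<alpha>)"
    unfolding e cos_diff by simp
  moreover have "cos (\<alpha> - m) * sin m - sin (\<alpha> - m) * cos m = sin (2*m - \<alpha>)"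
    unfolding e sin_diff by simp
  ultimately show ?thesis by (simp add: vec3_eq rot_eq_def bpv_def)
qed

lemma rot_eq_swap:
  shows "rot_eq ((x + y) / 2) pi x = bpv y" and "rot_eq ((x + y) / 2) pi y = bpv x"
proof -
  have e: "2 * ((x + y) / 2) = x + y" by simp
  show "rot_eq ((x + y) / 2) pi x = bpv y" "rot_eq ((x + y) / 2) pi y = bpv x"
    unfolding rot_eq_end e by simp_all
qed

lemma rot_eq_S2: "rot_eq m \<phi> \<alpha> \<in> S2"
proof -
  let ?c = "cos (\<alpha> - m)" and ?s = "sin (\<alpha> - m)"
  have "(?c * cos m - ?s * cos \<phi> * sin m)^2 + (?c * sin m + ?s * cos \<phi> * cos m)^2 + (?s * sin \<phi>)^2
      = ?c^2 * ((sin m)^2 + (cos m)^2) + ?s^2 * ((cos \<phi>)^2 * ((sin m)^2 + (cos m)^2) + (sin \<phi>)^2)"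
    by algebra
  also have "\<dots> = 1" by simp
  finally show ?thesis by (simp add: S2_def norm3_eq1 rot_eq_def)
qed

lemma rot_eq_cont: "continuous_on S (\<lambda>t::real. rot_eq m (pi * t) \<alpha>)"
proof -
  have e: "(\<lambda>t. rot_eq m (pi * t) \<alpha>) = (\<lambda>t. cos (\<alpha> - m) *\<^sub>R vector [cos m, sin m, 0] +
      (sin (\<alpha> - m) * cos (pi * t)) *\<^sub>R vector [- sin m, cos m, 0] +
      (sin (\<alpha> - m) * sin (pi * t)) *\<^sub>R (vector [0, 0, 1] :: real^3))"
    by (auto simp: fun_eq_iff vec3_eq rot_eq_def algebra_simps)
  show ?thesis unfolding e by (intro continuous_intros)
qed

lemma axial_rot_eq: "axial m (rot_eq m \<phi> \<alpha>) = cos (\<alpha> - m)"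
proof -
  let ?c = "cos (\<alpha> - m)" and ?s = "sin (\<alpha> - m)"
  have "(?c * cos m - ?s * cos \<phi> * sin m) * cos m + (?c * sin m + ?s * cos \<phi> * cos m) * sin m
      = ?c * ((sin m)^2 + (cos m)^2)" by algebra
  then show ?thesis by (simp add: axial_def rot_eq_def)
qed

lemma axial_bpv: "axial m (bpv \<beta>) = cos (\<beta> - m)"
  by (simp add: axial_def bpv_def cos_diff)

text \<open>A rotated equatorial point can only meet the equator at the same distance from the axis;
  this keeps the twisting strings away from the other base points.\<close>

lemma rot_eq_meets_equator:
  assumes "\<bar>\<alpha> - m\<bar> \<le> pi" "\<bar>\<beta> - m\<bar> \<le> pi" "rot_eq m \<phi> \<alpha> = bpv \<beta>"
  shows "\<bar>\<alpha> - m\<bar> = \<bar>\<beta> - m\<bar>"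
proof -
  have "cos \<bar>\<alpha> - m\<bar> = cos \<bar>\<beta> - m\<bar>"
    using arg_cong[OF assms(3), of "axial m"] by (simp add: axial_rot_eq axial_bpv)
  then show ?thesis using assms(1,2) cos_inj_pi by simp
qed

lemma midpoint_dist_cases:
  fixes x y z :: real
  assumes "\<bar>z - (x + y) / 2\<bar> = (y - x) / 2"
  shows "z = x \<or> z = y"
  using assms by (auto simp: abs_if field_simps split: if_splits)

lemma rot_eq_pair_ne:
  assumes h: "0 < h" "h < pi"
  shows "rot_eq m \<phi> (m - h) \<noteq> rot_eq m \<phi> (m + h)"
proof
  assume e: "rot_eq m \<phi> (m - h) = rot_eq m \<phi> (m + h)"
  have sh: "sin h \<noteq> 0" using h sin_gt_zero by force
  from e have "sin h * cos \<phi> * sin m = 0" "sin h * cos \<phi> * cos m = 0" "sin h * sin \<phi> = 0"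
    by (auto simp: vec3_eq rot_eq_def)
  with sh have "cos \<phi> * sin m = 0" "cos \<phi> * cos m = 0" "sin \<phi> = 0" by auto
  then show False using sin_cos_squared_add[of m] sin_cos_squared_add[of \<phi>]
    by (metis mult_eq_0_iff power2_eq_square add_0 zero_neq_one)
qed

definition half_twist :: "nat \<Rightarrow> nat \<Rightarrow> pth" where
  "half_twist n i = (\<lambda>t a.
      if a \<in> {i, i+1} then rot_eq ((bp_angle i + bp_angle (i+1)) / 2) (pi * t) (bp_angle a)
      else base {1..n} a)"

lemma psigma_half_twist: "psigma n i = pclass (half_twist n i)"
  by (simp add: psigma_def half_twist_def)

lemma half_twist_conf:
  assumes i: "1 \<le> i" "i + 1 \<le> n"
  shows "half_twist n i t \<in> conf {1..n}"
proof -
  let ?m = "(bp_angle i + bp_angle (i+1)) / 2" and ?h = "(bp_angle (i+1) - bp_angle i) / 2"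
  let ?c = "half_twist n i t"
  have h0: "0 < ?h" using i bp_angle_mono[of i "i+1"] by simp
  have hpi: "?h < pi" using bp_angle_rng[of i] bp_angle_rng[of "i+1"] h0 by simp
  have near: "\<bar>bp_angle b - ?m\<bar> \<le> pi" for b
    using bp_angle_rng[of b] bp_angle_rng[of i] bp_angle_rng[of "i+1"] by (auto simp: abs_le_iff field_simps)
  have other: "?c b = bpv (bp_angle b)" if "b \<notin> {i, i+1}" "b \<in> {1..n}" for b
    using that by (simp add: half_twist_def base_def bp_bpv)
  have twist: "?c a = rot_eq ?m (pi * t) (bp_angle a)" if "a \<in> {i, i+1}" for a
    using that by (simp add: half_twist_def)
  have "bp_angle i - ?m = - ?h" "bp_angle (i+1) - ?m = ?h" by (simp_all add: field_simps)
  then have dist: "\<bar>bp_angle a - ?m\<bar> = ?h" if "a \<in> {i, i+1}" for a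
    using that h0 by auto
  have ne: "?c a \<noteq> ?c b" if "a \<in> {i, i+1}" "b \<notin> {i, i+1}" "b \<in> {1..n}" for a b
  proof
    assume "?c a = ?c b"
    then have "\<bar>bp_angle b - ?m\<bar> = ?h"
      using rot_eq_meets_equator[OF near near] twist[OF that(1)] other[OF that(2,3)] dist[OF that(1)]
      by metis
    then have "bp_angle b = bp_angle i \<or> bp_angle b = bp_angle (i+1)" by (rule midpoint_dist_cases)
    then show False using that(2) bp_angle_inj by blast
  qed
  have pair: "?c i \<noteq> ?c (i+1)"
  proof -
    have "bp_angle i = ?m - ?h" "bp_angle (i+1) = ?m + ?h" by (simp_all add: field_simps)
    then show ?thesis using rot_eq_pair_ne[OF h0 hpi, of ?m "pi * t"] twist[of i] twist[of "i+1"] by simp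
  qed
  have "inj_on ?c {1..n}"
  proof (rule inj_onI)
    fix a b assume ab: "a \<in> {1..n}" "b \<in> {1..n}" "?c a = ?c b"
    show "a = b"
    proof (cases "a \<in> {i, i+1}"; cases "b \<in> {i, i+1}")
      assume "a \<in> {i, i+1}" "b \<in> {i, i+1}" then show ?thesis using ab(3) pair by auto
    next
      assume "a \<in> {i, i+1}" "b \<notin> {i, i+1}" then show ?thesis using ab ne by blast
    next
      assume "a \<notin> {i, i+1}" "b \<in> {i, i+1}" then show ?thesis using ab ne by metis
    next
      assume "a \<notin> {i, i+1}" "b \<notin> {i, i+1}"
      then show ?thesis using ab other by (metis bp_bpv bp_eq_iff)
    qed
  qed
  moreover have "\<forall>a\<in>{1..n}. ?c a \<in> S2" by (auto simp: half_twist_def rot_eq_S2 base_def bp_S2)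
  moreover have "\<forall>a. a \<notin> {1..n} \<longrightarrow> ?c a = 0" using i by (auto simp: half_twist_def base_def)
  ultimately show ?thesis by (simp add: conf_def)
qed

definition tau :: "nat \<Rightarrow> nat \<Rightarrow> nat" where
  "tau i a = (if a = i then i + 1 else if a = i + 1 then i else a)"

lemma half_twist_finish:
  assumes "a \<in> {1..n}"
  shows "pathfinish (half_twist n i) a = bp (tau i a)"
  using assms by (auto simp: pathfinish_def half_twist_def base_def tau_def rot_eq_swap bp_bpv)

lemma half_twist_rep:
  assumes i: "1 \<le> i" "i + 1 \<le> n"
  shows "pbraid_rep {1..n} (half_twist n i)"
proof -
  have "path (half_twist n i)"
    unfolding path_def
  proof (rule continuous_on_coordinatewise_then_product)
    fix a show "continuous_on {0..1} (\<lambda>t. half_twist n i t a)"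
      by (cases "a \<in> {i, i+1}") (auto simp: half_twist_def rot_eq_cont)
  qed
  moreover have "pathstart (half_twist n i) = base {1..n}"
    using i by (auto simp: pathstart_def half_twist_def fun_eq_iff rot_eq_start bp_bpv base_def)
  ultimately show ?thesis
    using half_twist_conf[OF i] half_twist_finish
    by (auto simp: pbraid_rep_def path_image_def)
qed

lemma fin_half_twist: "a \<in> {1..n} \<Longrightarrow> fin (half_twist n i) a = tau i a"
  by (simp add: fin_def half_twist_finish)

section \<open>Partial permutations realised by braids\<close>

text \<open>Products of classes realise composites of partial maps, which lets
  us compute where the strings of a word in the generators go.\<close>

definition fin_map :: "nat set \<Rightarrow> pth \<Rightarrow> nat \<Rightarrow> nat option" where
  "fin_map A \<gamma> = (\<lambda>a. if a \<in> A then Some (fin \<gamma> a) else None)"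

definition realises :: "pth set \<Rightarrow> (nat \<Rightarrow> nat option) \<Rightarrow> bool" where
  "realises X m \<longleftrightarrow> (\<exists>\<gamma> A. pbraid_rep A \<gamma> \<and> X = pclass \<gamma> \<and> fin_map A \<gamma> = m)"

definition id_map :: "nat set \<Rightarrow> nat \<Rightarrow> nat option" where
  "id_map X = (\<lambda>a. if a \<in> X then Some a else None)"

definition perm_map :: "nat \<Rightarrow> (nat \<Rightarrow> nat) \<Rightarrow> nat \<Rightarrow> nat option" where
  "perm_map n f = (\<lambda>a. if a \<in> {1..n} then Some (f a) else None)"

lemma realises_between: "realises X m \<Longrightarrow> pbraid_between (dom m) (ran m) X"
proof -
  assume "realises X m"
  then obtain \<gamma> A where r: "pbraid_rep A \<gamma>" "X = pclass \<gamma>" and m: "m = fin_map A \<gamma>"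
    unfolding realises_def by blast
  have "dom m = A" "ran m = fin \<gamma> ` A" by (auto simp: m fin_map_def dom_def ran_def)
  then show ?thesis unfolding pbraid_between_def using r by blast
qed

lemma realises_mult: "realises X m1 \<Longrightarrow> realises Y m2 \<Longrightarrow> realises (X \<cdot>\<^sub>p Y) (m2 \<circ>\<^sub>m m1)"
proof -
  assume "realises X m1" "realises Y m2"
  then obtain \<gamma> A \<delta> B where r1: "pbraid_rep A \<gamma>" "X = pclass \<gamma>" "fin_map A \<gamma> = m1"
    and r2: "pbraid_rep B \<delta>" "Y = pclass \<delta>" "fin_map B \<delta> = m2"
    unfolding realises_def by blast
  have "fin_map (pcomp_dom \<gamma> \<delta>) (pcomp \<gamma> \<delta>) = fin_map B \<delta> \<circ>\<^sub>m fin_map A \<gamma>"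
    using pcomp_dom_iff[OF r1(1) r2(1)] fin_pcomp[of _ \<gamma> \<delta>]
    by (auto simp: fin_map_def map_comp_def fun_eq_iff)
  then show ?thesis
    unfolding realises_def r1(2) r2(2) pmult_pclass[OF r1(1) r2(1)] r1(3) r2(3)
    using pcomp_rep[OF r1(1) r2(1)] by blast
qed

lemma realises_perm_inj: "realises X (perm_map n f) \<Longrightarrow> inj_on f {1..n}"
proof -
  assume "realises X (perm_map n f)"
  then obtain \<gamma> A where r: "pbraid_rep A \<gamma>" and m: "fin_map A \<gamma> = perm_map n f"
    unfolding realises_def by blast
  have "dom (fin_map A \<gamma>) = A" "dom (perm_map n f) = {1..n}"
    by (auto simp: fin_map_def perm_map_def dom_def)
  then have A: "A = {1..n}" using m by simp
  have "a \<in> {1..n} \<Longrightarrow> f a = fin \<gamma> a" for a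
    using fun_cong[OF m, of a] A by (simp add: fin_map_def perm_map_def)
  then have "inj_on f {1..n} = inj_on (fin \<gamma>) {1..n}" by (rule inj_on_cong)
  with rep_fin_inj[OF r] A show ?thesis by simp
qed

lemma realises_idp: "finite A \<Longrightarrow> realises (pclass (idp A)) (id_map A)"
proof -
  assume "finite A"
  moreover have "fin_map A (idp A) = id_map A" by (simp add: fin_map_def id_map_def fin_idp fun_eq_iff)
  ultimately show ?thesis unfolding realises_def using rep_idp by blast
qed

lemma realises_pone: "realises (pone n) (id_map {1..n})"
  using realises_idp[of "{1..n}"] by (simp add: pone_def idp_def)

lemma realises_peps: "realises (peps n i) (id_map ({1..n} - {i}))"
  using realises_idp[of "{1..n} - {i}"] by (simp add: peps_def idp_def)

lemma realises_psigma: "1 \<le> i \<Longrightarrow> i + 1 \<le> n \<Longrightarrow> realises (psigma n i) (perm_map n (tau i))"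
proof -
  assume "1 \<le> i" "i + 1 \<le> n"
  moreover have "fin_map {1..n} (half_twist n i) = perm_map n (tau i)"
    by (simp add: fin_map_def perm_map_def fin_half_twist fun_eq_iff)
  ultimately show ?thesis unfolding realises_def psigma_half_twist using half_twist_rep by blast
qed

lemma realises_pprod:
  assumes "\<And>r. r \<in> set rs \<Longrightarrow> realises (F r) (M r)"
  shows "realises (pprod n (map F rs)) (foldl (\<lambda>m r. M r \<circ>\<^sub>m m) (id_map {1..n}) rs)"
  using assms
proof (induction rs rule: rev_induct)
  case Nil
  show ?case using realises_pone[of n] by (simp add: pprod_def)
next
  case (snoc x xs)
  then show ?case by (simp add: pprod_def realises_mult)
qed

lemma foldl_comp_shift:
  fixes G :: "'a \<Rightarrow> 'b \<Rightarrow> 'b" and f0 :: "'b \<Rightarrow> 'b"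
  shows "foldl (\<lambda>f r. G r \<circ> f) f0 rs = foldl (\<lambda>f r. G r \<circ> f) id rs \<circ> f0"
proof (induction rs arbitrary: f0)
  case (Cons r rs)
  have "foldl (\<lambda>f r. G r \<circ> f) f0 (r#rs) = foldl (\<lambda>f r. G r \<circ> f) id rs \<circ> (G r \<circ> f0)"
    unfolding foldl_Cons by (rule Cons.IH)
  moreover have "foldl (\<lambda>f r. G r \<circ> f) id (r#rs) = foldl (\<lambda>f r. G r \<circ> f) id rs \<circ> G r"
    unfolding foldl_Cons using Cons.IH[of "G r \<circ> id"] by (simp only: comp_id)
  ultimately show ?case by (simp only: comp_assoc)
qed simp

lemma perm_map_comp:
  "(\<And>a. a \<in> {1..n} \<Longrightarrow> f a \<in> {1..n}) \<Longrightarrow> perm_map n g \<circ>\<^sub>m perm_map n f = perm_map n (g \<circ> f)"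
  by (auto simp: perm_map_def map_comp_def fun_eq_iff)

lemma foldl_perm_map:
  assumes "\<And>r a. r \<in> set rs \<Longrightarrow> a \<in> {1..n} \<Longrightarrow> G r a \<in> {1..n}"
    and "\<And>a. a \<in> {1..n} \<Longrightarrow> f0 a \<in> {1..n}"
  shows "foldl (\<lambda>m r. perm_map n (G r) \<circ>\<^sub>m m) (perm_map n f0) rs
    = perm_map n (foldl (\<lambda>f r. G r \<circ> f) f0 rs)"
  using assms
proof (induction rs arbitrary: f0)
  case (Cons r rs)
  have "perm_map n (G r) \<circ>\<^sub>m perm_map n f0 = perm_map n (G r \<circ> f0)"
    using Cons.prems(2) by (rule perm_map_comp)
  moreover have "foldl (\<lambda>m r. perm_map n (G r) \<circ>\<^sub>m m) (perm_map n (G r \<circ> f0)) rs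
      = perm_map n (foldl (\<lambda>f r. G r \<circ> f) (G r \<circ> f0) rs)"
    by (rule Cons.IH) (use Cons.prems in auto)
  ultimately show ?case by (simp only: foldl_Cons)
qed simp

lemma realises_pprod_perm:
  assumes "\<And>r. r \<in> set rs \<Longrightarrow> realises (F r) (perm_map n (G r))"
    and "\<And>r a. r \<in> set rs \<Longrightarrow> a \<in> {1..n} \<Longrightarrow> G r a \<in> {1..n}"
  shows "realises (pprod n (map F rs)) (perm_map n (foldl (\<lambda>f r. G r \<circ> f) id rs))"
proof -
  have "id_map {1..n} = perm_map n id" by (simp add: id_map_def perm_map_def fun_eq_iff)
  then show ?thesis
    using realises_pprod[of rs F "\<lambda>r. perm_map n (G r)" n] foldl_perm_map[of rs n G id] assms
    by simp
qed

lemma realises_peps_range: "k \<le> n \<Longrightarrow> realises (peps_range n k) (id_map {1..k})"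
proof -
  assume k: "k \<le> n"
  have drop: "foldl (\<lambda>m i. id_map ({1..n} - {i}) \<circ>\<^sub>m m) (id_map Y) xs = id_map (Y - set xs)"
    if "Y \<subseteq> {1..n}" for Y xs
    using that
  proof (induction xs arbitrary: Y)
    case (Cons i xs)
    have "id_map ({1..n} - {i}) \<circ>\<^sub>m id_map Y = id_map (Y - {i})"
      using Cons.prems by (auto simp: id_map_def map_comp_def fun_eq_iff)
    moreover have "Y - {i} \<subseteq> {1..n}" using Cons.prems by blast
    ultimately show ?case using Cons.IH[of "Y - {i}"] by (simp add: Diff_insert2[symmetric] insert_commute)
  qed simp
  have "{1..n} - set [k+1..<n+1] = {1..k}" using k by auto
  then show ?thesis
    using realises_pprod[of "[k+1..<n+1]" "peps n" "\<lambda>i. id_map ({1..n} - {i})" n] realises_peps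
      drop[of "{1..n}" "[k+1..<n+1]"]
    unfolding peps_range_def by simp
qed

definition desc_perm :: "nat \<Rightarrow> nat \<Rightarrow> nat \<Rightarrow> nat" where
  "desc_perm i r a = (if a = i + 1 then r else if r \<le> a \<and> a \<le> i then a + 1 else a)"

definition asc_perm :: "nat \<Rightarrow> nat \<Rightarrow> nat \<Rightarrow> nat" where
  "asc_perm j r a = (if a = r then j + 1 else if r + 1 \<le> a \<and> a \<le> j + 1 then a - 1 else a)"

lemma desc_perm_foldl: "r \<le> i + 1 \<Longrightarrow> foldl (\<lambda>f s. tau s \<circ> f) id (rev [r..<i+1]) = desc_perm i r"
proof (induction i)
  case 0
  then show ?case by (cases r) (auto simp: fun_eq_iff desc_perm_def tau_def)
next
  case (Suc i)
  show ?case
  proof (cases "r \<le> i + 1")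
    case True
    have "rev [r..<Suc i + 1] = Suc i # rev [r..<i+1]" using True by simp
    then have "foldl (\<lambda>f s. tau s \<circ> f) id (rev [r..<Suc i+1])
        = foldl (\<lambda>f s. tau s \<circ> f) id (rev [r..<i+1]) \<circ> (tau (Suc i) \<circ> id)"
      using foldl_comp_shift by (metis foldl_Cons)
    also have "\<dots> = desc_perm i r \<circ> tau (Suc i)" by (simp only: Suc.IH[OF True] comp_id)
    also have "\<dots> = desc_perm (Suc i) r" using True by (auto simp: fun_eq_iff desc_perm_def tau_def)
    finally show ?thesis .
  next
    case False
    then have "r = Suc i + 1" using Suc.prems by simp
    then show ?thesis by (auto simp: fun_eq_iff desc_perm_def)
  qed
qed

lemma asc_perm_foldl: "r \<le> j + 1 \<Longrightarrow> foldl (\<lambda>f s. tau s \<circ> f) id [r..<j+1] = asc_perm j r"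
proof (induction j)
  case 0
  then show ?case by (cases r) (auto simp: fun_eq_iff asc_perm_def tau_def)
next
  case (Suc j)
  show ?case
  proof (cases "r \<le> j + 1")
    case True
    have "[r..<Suc j + 1] = [r..<j+1] @ [Suc j]" using True by simp
    then have "foldl (\<lambda>f s. tau s \<circ> f) id [r..<Suc j+1] = tau (Suc j) \<circ> asc_perm j r"
      by (simp only: foldl_append foldl_Cons foldl_Nil Suc.IH[OF True])
    also have "\<dots> = asc_perm (Suc j) r" using True by (auto simp: fun_eq_iff asc_perm_def tau_def)
    finally show ?thesis .
  next
    case False
    then have "r = Suc j + 1" using Suc.prems by simp
    then show ?thesis by (auto simp: fun_eq_iff asc_perm_def)
  qed
qed

lemma realises_desc_block:
  assumes "1 \<le> r" "r \<le> i + 1" "i + 1 \<le> n"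
  shows "realises (desc_block n i r) (perm_map n (desc_perm i r))"
proof -
  have "realises (pprod n (map (psigma n) (rev [r..<i+1])))
      (perm_map n (foldl (\<lambda>f s. tau s \<circ> f) id (rev [r..<i+1])))"
    by (rule realises_pprod_perm) (use assms in \<open>auto intro: realises_psigma simp: tau_def\<close>)
  then show ?thesis unfolding desc_perm_foldl[OF assms(2)] desc_block_def .
qed

lemma realises_asc_block:
  assumes "1 \<le> r" "r \<le> j + 1" "j + 1 \<le> n"
  shows "realises (asc_block n r j) (perm_map n (asc_perm j r))"
proof -
  have "realises (pprod n (map (psigma n) [r..<j+1]))
      (perm_map n (foldl (\<lambda>f s. tau s \<circ> f) id [r..<j+1]))"
    by (rule realises_pprod_perm) (use assms in \<open>auto intro: realises_psigma simp: tau_def\<close>)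
  then show ?thesis unfolding asc_perm_foldl[OF assms(2)] asc_block_def .
qed

definition index_list :: "nat \<Rightarrow> nat \<Rightarrow> nat list \<Rightarrow> bool" where
  "index_list n k I \<longleftrightarrow> 1 \<le> n \<and> k \<le> n \<and> length I = k \<and> sorted_wrt (<) I \<and> (\<forall>i\<in>set I. i \<le> n - 1)"

lemma sorted_nth_ge: "sorted_wrt (<) (xs::nat list) \<Longrightarrow> m < length xs \<Longrightarrow> m \<le> xs ! m"
proof (induction m)
  case (Suc m)
  then have "xs ! m < xs ! Suc m" using sorted_wrt_nth_less[of "(<)" xs m "Suc m"] by simp
  with Suc show ?case by simp
qed simp

lemma index_list_nth:
  assumes "index_list n k I" "r \<in> {1..k}"
  shows "r \<le> I ! (r - 1) + 1" "I ! (r - 1) + 1 \<le> n"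
proof -
  have s: "sorted_wrt (<) I" and l: "length I = k" and b: "\<forall>i\<in>set I. i \<le> n - 1" and n: "1 \<le> n"
    using assms(1) by (auto simp: index_list_def)
  have "r - 1 < length I" using assms(2) l by auto
  then show "r \<le> I ! (r - 1) + 1" using sorted_nth_ge[OF s] by fastforce
  show "I ! (r - 1) + 1 \<le> n" using b nth_mem[OF \<open>r - 1 < length I\<close>] n by fastforce
qed

definition left_blocks :: "nat \<Rightarrow> nat \<Rightarrow> nat list \<Rightarrow> pth set" where
  "left_blocks n k I = pprod n (map (\<lambda>r. desc_block n (I ! (r - 1)) r) [1..<k+1])"

definition right_blocks :: "nat \<Rightarrow> nat \<Rightarrow> nat list \<Rightarrow> pth set" where
  "right_blocks n k J = pprod n (map (\<lambda>r. asc_block n r (J ! (r - 1))) (rev [1..<k+1]))"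

definition left_perm :: "nat list \<Rightarrow> nat \<Rightarrow> nat \<Rightarrow> nat" where
  "left_perm I m = foldl (\<lambda>f r. desc_perm (I ! (r - 1)) r \<circ> f) id [1..<m+1]"

definition right_perm :: "nat list \<Rightarrow> nat \<Rightarrow> nat \<Rightarrow> nat" where
  "right_perm J m = foldl (\<lambda>f r. asc_perm (J ! (r - 1)) r \<circ> f) id (rev [1..<m+1])"

lemma realises_left_blocks: "index_list n k I \<Longrightarrow> realises (left_blocks n k I) (perm_map n (left_perm I k))"
  unfolding left_blocks_def left_perm_def
proof (rule realises_pprod_perm)
  assume v: "index_list n k I"
  fix r assume "r \<in> set [1..<k+1]"
  then have r: "r \<in> {1..k}" by auto
  show "realises (desc_block n (I ! (r - 1)) r) (perm_map n (desc_perm (I ! (r - 1)) r))"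
    by (rule realises_desc_block) (use r index_list_nth[OF v r] in auto)
  fix a assume "a \<in> {1..n}"
  then show "desc_perm (I ! (r - 1)) r a \<in> {1..n}"
    using r index_list_nth[OF v r] by (auto simp: desc_perm_def)
qed

lemma realises_right_blocks: "index_list n k J \<Longrightarrow> realises (right_blocks n k J) (perm_map n (right_perm J k))"
  unfolding right_blocks_def right_perm_def
proof (rule realises_pprod_perm)
  assume v: "index_list n k J"
  fix r assume "r \<in> set (rev [1..<k+1])"
  then have r: "r \<in> {1..k}" by auto
  show "realises (asc_block n r (J ! (r - 1))) (perm_map n (asc_perm (J ! (r - 1)) r))"
    by (rule realises_asc_block) (use r index_list_nth[OF v r] in auto)
  fix a assume "a \<in> {1..n}"
  then show "asc_perm (J ! (r - 1)) r a \<in> {1..n}"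
    using r index_list_nth[OF v r] by (auto simp: asc_perm_def)
qed

lemma left_perm_nth:
  assumes s: "sorted_wrt (<) I"
  shows "m \<le> length I \<Longrightarrow> (\<forall>r<m. left_perm I m (I ! r + 1) = r + 1) \<and>
    (\<forall>a. (\<forall>r<m. I ! r + 1 < a) \<longrightarrow> left_perm I m a = a)"
proof (induction m)
  case 0 then show ?case by (simp add: left_perm_def)
next
  case (Suc m)
  then have IH: "\<forall>r<m. left_perm I m (I ! r + 1) = r + 1"
    "\<forall>a. (\<forall>r<m. I ! r + 1 < a) \<longrightarrow> left_perm I m a = a" by auto
  have step: "left_perm I (Suc m) = desc_perm (I ! m) (Suc m) \<circ> left_perm I m"
    by (simp add: left_perm_def)
  have lt: "r < m \<Longrightarrow> I ! r < I ! m" for r using sorted_wrt_nth_less[OF s, of r m] Suc.prems by simp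
  have ge: "m \<le> I ! m" using sorted_nth_ge[OF s] Suc.prems by simp
  have A: "left_perm I (Suc m) (I ! r + 1) = r + 1" if "r < Suc m" for r
  proof (cases "r = m")
    case True
    have "left_perm I m (I ! m + 1) = I ! m + 1" using IH(2) lt by fastforce
    then show ?thesis using True by (simp add: step desc_perm_def)
  next
    case False
    then have "r < m" using that by simp
    then show ?thesis using IH(1) lt[of r] ge by (simp add: step desc_perm_def)
  qed
  have B: "left_perm I (Suc m) a = a" if "\<forall>r<Suc m. I ! r + 1 < a" for a
  proof -
    have "left_perm I m a = a" using IH(2) that by auto
    moreover have "I ! m + 1 < a" using that by auto
    ultimately show ?thesis by (simp add: step desc_perm_def)
  qed
  show ?case using A B by blast
qed

lemma right_perm_nth:
  assumes s: "sorted_wrt (<) J"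
  shows "m \<le> length J \<Longrightarrow> (\<forall>r<m. right_perm J m (r + 1) = J ! r + 1) \<and>
    (\<forall>a. (\<forall>r<m. J ! r + 1 < a) \<longrightarrow> right_perm J m a = a)"
proof (induction m)
  case 0 then show ?case by (simp add: right_perm_def)
next
  case (Suc m)
  then have IH: "\<forall>r<m. right_perm J m (r + 1) = J ! r + 1"
    "\<forall>a. (\<forall>r<m. J ! r + 1 < a) \<longrightarrow> right_perm J m a = a" by auto
  have step: "right_perm J (Suc m) = right_perm J m \<circ> asc_perm (J ! m) (Suc m)"
  proof -
    have "rev [1..<Suc m + 1] = Suc m # rev [1..<m+1]" by simp
    then show ?thesis
      using foldl_comp_shift[of "\<lambda>r. asc_perm (J ! (r - 1)) r" "asc_perm (J ! m) (Suc m)" "rev [1..<m+1]"]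
      by (simp add: right_perm_def)
  qed
  have lt: "r < m \<Longrightarrow> J ! r < J ! m" for r using sorted_wrt_nth_less[OF s, of r m] Suc.prems by simp
  have ge: "m \<le> J ! m" using sorted_nth_ge[OF s] Suc.prems by simp
  have A: "right_perm J (Suc m) (r + 1) = J ! r + 1" if "r < Suc m" for r
  proof (cases "r = m")
    case True
    have "right_perm J m (J ! m + 1) = J ! m + 1" using IH(2) lt by fastforce
    then show ?thesis using True by (simp add: step asc_perm_def)
  next
    case False
    then have "r < m" using that by simp
    then show ?thesis using IH(1) by (simp add: step asc_perm_def)
  qed
  have B: "right_perm J (Suc m) a = a" if "\<forall>r<Suc m. J ! r + 1 < a" for a
  proof -
    have "J ! m + 1 < a" using that by auto
    then have "asc_perm (J ! m) (Suc m) a = a" using ge by (simp add: asc_perm_def)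
    moreover have "right_perm J m a = a" using IH(2) that by auto
    ultimately show ?thesis by (simp add: step)
  qed
  show ?case using A B by blast
qed

section \<open>The normal form as a sandwich\<close>

definition left_factor :: "nat \<Rightarrow> nat \<Rightarrow> nat list \<Rightarrow> pth set" where
  "left_factor n k I = left_blocks n k I \<cdot>\<^sub>p peps_range n k"

definition right_factor :: "nat \<Rightarrow> nat \<Rightarrow> nat list \<Rightarrow> pth set" where
  "right_factor n k J = peps_range n k \<cdot>\<^sub>p right_blocks n k J"

lemma dom_id_perm: "dom (id_map K \<circ>\<^sub>m perm_map n f) = {a \<in> {1..n}. f a \<in> K}"
  by (auto simp: dom_def map_comp_def id_map_def perm_map_def)

lemma ran_id_perm: "ran (id_map K \<circ>\<^sub>m perm_map n f) = f ` {a \<in> {1..n}. f a \<in> K}"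
  by (auto simp: ran_def map_comp_def id_map_def perm_map_def split: if_splits)

lemma perm_id_map: "K \<subseteq> {1..n} \<Longrightarrow> perm_map n f \<circ>\<^sub>m id_map K = (\<lambda>a. if a \<in> K then Some (f a) else None)"
  by (auto simp: map_comp_def id_map_def perm_map_def fun_eq_iff)

lemma dom_perm_id: "K \<subseteq> {1..n} \<Longrightarrow> dom (perm_map n f \<circ>\<^sub>m id_map K) = K"
  by (simp add: perm_id_map dom_def)

lemma ran_perm_id: "K \<subseteq> {1..n} \<Longrightarrow> ran (perm_map n f \<circ>\<^sub>m id_map K) = f ` K"
  by (auto simp: perm_id_map ran_def split: if_splits)

lemma set_map_Suc: "set (map Suc xs) = {xs ! r + 1 | r. r < length xs}"
proof -
  have "set (map Suc xs) = Suc ` set xs" by (rule set_map)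
  also have "set xs = {xs ! i | i. i < length xs}" by (rule set_conv_nth)
  finally show ?thesis by auto
qed

lemma left_factor_between:
  assumes v: "index_list n k I"
  shows "pbraid_between (set (map Suc I)) {1..k} (left_factor n k I)"
proof -
  have s: "sorted_wrt (<) I" and l: "length I = k" and kn: "k \<le> n"
    using v by (auto simp: index_list_def)
  let ?\<pi> = "left_perm I k"
  have realised: "realises (left_factor n k I) (id_map {1..k} \<circ>\<^sub>m perm_map n ?\<pi>)"
    unfolding left_factor_def
    by (rule realises_mult[OF realises_left_blocks[OF v] realises_peps_range[OF kn]])
  have inj: "inj_on ?\<pi> {1..n}" by (rule realises_perm_inj[OF realises_left_blocks[OF v]])
  have moves: "r < k \<Longrightarrow> ?\<pi> (I ! r + 1) = r + 1" for r using left_perm_nth[OF s, of k] l by auto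
  have inside: "r < k \<Longrightarrow> I ! r + 1 \<in> {1..n}" for r using index_list_nth[OF v, of "r + 1"] by auto
  have kept: "{a \<in> {1..n}. ?\<pi> a \<in> {1..k}} = set (map Suc I)"
  proof (intro equalityI subsetI)
    fix a assume "a \<in> {a \<in> {1..n}. ?\<pi> a \<in> {1..k}}"
    then have a: "a \<in> {1..n}" "?\<pi> a - 1 < k" "?\<pi> a = (?\<pi> a - 1) + 1" by auto
    then have "?\<pi> a = ?\<pi> (I ! (?\<pi> a - 1) + 1)" using moves by metis
    then have "a = I ! (?\<pi> a - 1) + 1" using inj a inside by (auto dest: inj_onD)
    then show "a \<in> set (map Suc I)" unfolding set_map_Suc using a(2) l by blast
  next
    fix a assume "a \<in> set (map Suc I)"
    then obtain r where "r < k" "a = I ! r + 1" unfolding set_map_Suc l by blast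
    then show "a \<in> {a \<in> {1..n}. ?\<pi> a \<in> {1..k}}" using moves inside by auto
  qed
  have "?\<pi> ` set (map Suc I) = {1..k}"
  proof (intro equalityI subsetI)
    fix s assume "s \<in> {1..k}"
    then have "s = ?\<pi> (I ! (s - 1) + 1)" "I ! (s - 1) + 1 \<in> set (map Suc I)"
      using moves[of "s - 1"] unfolding set_map_Suc l by auto
    then show "s \<in> ?\<pi> ` set (map Suc I)" by blast
  qed (use kept in auto)
  then show ?thesis
    using realises_between[OF realised] unfolding dom_id_perm ran_id_perm kept by simp
qed

lemma right_factor_between:
  assumes v: "index_list n k J"
  shows "pbraid_between {1..k} (set (map Suc J)) (right_factor n k J)"
proof -
  have s: "sorted_wrt (<) J" and l: "length J = k" and kn: "k \<le> n"
    using v by (auto simp: index_list_def)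
  let ?\<rho> = "right_perm J k"
  have realised: "realises (right_factor n k J) (perm_map n ?\<rho> \<circ>\<^sub>m id_map {1..k})"
    unfolding right_factor_def
    by (rule realises_mult[OF realises_peps_range[OF kn] realises_right_blocks[OF v]])
  have moves: "r < k \<Longrightarrow> ?\<rho> (r + 1) = J ! r + 1" for r using right_perm_nth[OF s, of k] l by auto
  have image: "?\<rho> ` {1..k} = set (map Suc J)"
  proof (intro equalityI subsetI)
    fix c assume "c \<in> ?\<rho> ` {1..k}"
    then obtain a where "a \<in> {1..k}" "c = ?\<rho> a" by blast
    then have "a - 1 < k" "c = J ! (a - 1) + 1" using moves[of "a - 1"] by auto
    then show "c \<in> set (map Suc J)" unfolding set_map_Suc l by blast
  next
    fix c assume "c \<in> set (map Suc J)"
    then obtain r where "r < k" "c = J ! r + 1" unfolding set_map_Suc l by blast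
    then show "c \<in> ?\<rho> ` {1..k}" using moves by (intro image_eqI[of c ?\<rho> "r + 1"]) auto
  qed
  have sub: "{1..k} \<subseteq> {1..n}" using kn by auto
  show ?thesis
    using realises_between[OF realised] unfolding dom_perm_id[OF sub] ran_perm_id[OF sub] image .
qed

lemma normal_form_sandwich:
  assumes I: "index_list n k I" and J: "index_list n k J" and x: "x \<in> Br k"
  shows "normal_form n k I J x = left_factor n k I \<cdot>\<^sub>p x \<cdot>\<^sub>p right_factor n k J"
proof -
  have kn: "k \<le> n" using I by (simp add: index_list_def)
  have Lx: "pbraid_between (set (map Suc I)) {1..k} (left_factor n k I \<cdot>\<^sub>p x)"
    using pbraid_between_mult[OF left_factor_between[OF I]] x unfolding Br_iff .
  have "normal_form n k I J x = left_factor n k I \<cdot>\<^sub>p x \<cdot>\<^sub>p peps_range n k \<cdot>\<^sub>p right_blocks n k J"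
    by (simp add: normal_form_def left_factor_def left_blocks_def right_blocks_def)
  also have "\<dots> = left_factor n k I \<cdot>\<^sub>p x \<cdot>\<^sub>p right_factor n k J"
    unfolding right_factor_def
    by (rule pbraid_assoc[OF Lx realises_between[OF realises_peps_range[OF kn]]
          realises_between[OF realises_right_blocks[OF J]]])
  finally show ?thesis .
qed

lemma normal_form_bij:
  assumes I: "index_list n k I" and J: "index_list n k J"
  shows "bij_betw (normal_form n k I J) (Br k)
    {\<beta>. pbraid_between (set (map Suc I)) (set (map Suc J)) \<beta>}"
proof -
  have Br: "Br k = {x. pbraid_between {1..k} {1..k} x}" by (auto simp: Br_iff)
  have "bij_betw (\<lambda>x. left_factor n k I \<cdot>\<^sub>p x \<cdot>\<^sub>p right_factor n k J) (Br k)
      {\<beta>. pbraid_between (set (map Suc I)) (set (map Suc J)) \<beta>}"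
    unfolding Br by (rule pbraid_sandwich_bij[OF left_factor_between[OF I] right_factor_between[OF J]])
  moreover have "bij_betw (normal_form n k I J) (Br k) S
      = bij_betw (\<lambda>x. left_factor n k I \<cdot>\<^sub>p x \<cdot>\<^sub>p right_factor n k J) (Br k) S" for S
    by (rule bij_betw_cong) (rule normal_form_sandwich[OF I J])
  ultimately show ?thesis by simp
qed

definition label_list :: "nat set \<Rightarrow> nat list" where
  "label_list A = sorted_list_of_set ((\<lambda>a. a - 1) ` A)"

lemma label_list:
  assumes A: "A \<subseteq> {1..n}" and n: "1 \<le> n"
  shows "index_list n (card A) (label_list A)" "set (map Suc (label_list A)) = A"
proof -
  have fin: "finite A" using A finite_subset by blast
  have inj: "inj_on (\<lambda>a. a - 1) A"
  proof (rule inj_onI)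
    fix x y assume "x \<in> A" "y \<in> A" "x - 1 = y - 1"
    moreover have "1 \<le> x" "1 \<le> y" using A calculation by auto
    ultimately show "x = y" by simp
  qed
  have set: "set (label_list A) = (\<lambda>a. a - 1) ` A" using fin by (simp add: label_list_def)
  have "length (label_list A) = card A"
    unfolding label_list_def using card_image[OF inj] by simp
  moreover have "card A \<le> n" using card_mono[OF _ A] by simp
  moreover have "\<forall>i\<in>set (label_list A). i \<le> n - 1"
    using A unfolding set by (auto simp: subset_iff diff_le_mono)
  ultimately show "index_list n (card A) (label_list A)"
    using n by (simp add: index_list_def label_list_def)
  show "set (map Suc (label_list A)) = A" using A set by (force simp: image_iff)
qed

lemma label_list_unique: "sorted_wrt (<) I \<Longrightarrow> set (map Suc I) = A \<Longrightarrow> I = label_list A"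
proof -
  assume s: "sorted_wrt (<) I" and A: "set (map Suc I) = A"
  have "(\<lambda>a. a - 1) ` A = set I" unfolding A[symmetric] by (simp add: image_image)
  then show "I = label_list A"
    unfolding label_list_def using s by (simp add: strict_sorted_equal)
qed

theorem theorem5p3:
  fixes n :: nat
  assumes "n \<ge> 1"
  shows "\<forall>\<beta>\<in>IBr n. \<exists>!(k, I, J, x).
     k \<le> n \<and> length I = k \<and> length J = k \<and>
     sorted_wrt (<) I \<and> sorted_wrt (<) J \<and>
     (\<forall>i\<in>set I. i \<le> n - 1) \<and> (\<forall>j\<in>set J. j \<le> n - 1) \<and>
     x \<in> Br k \<and> \<beta> = normal_form n k I J x"
proof
  fix \<beta> assume "\<beta> \<in> IBr n"
  then obtain A B where A: "A \<subseteq> {1..n}" and B: "B \<subseteq> {1..n}" and \<beta>: "pbraid_between A B \<beta>"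
    by (rule IBr_between)
  let ?k = "card A" and ?I = "label_list A" and ?J = "label_list B"
  have I: "index_list n ?k ?I" "set (map Suc ?I) = A" using label_list[OF A assms] by auto
  have J: "index_list n ?k ?J" "set (map Suc ?J) = B"
    using label_list[OF B assms] pbraid_between_card[OF \<beta>] by auto
  have bij: "bij_betw (normal_form n ?k ?I ?J) (Br ?k) {\<beta>. pbraid_between A B \<beta>}"
    using normal_form_bij[OF I(1) J(1)] unfolding I(2) J(2) .
  then obtain x where x: "x \<in> Br ?k" "\<beta> = normal_form n ?k ?I ?J x"
    using \<beta> by (auto simp: bij_betw_def)
  have unique: "(k, I', J', x') = (?k, ?I, ?J, x)"
    if "index_list n k I'" "index_list n k J'" "x' \<in> Br k" "\<beta> = normal_form n k I' J' x'" for k I' J' x'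
  proof -
    have "pbraid_between (set (map Suc I')) (set (map Suc J')) \<beta>"
      using bij_betw_apply[OF normal_form_bij[OF that(1,2)] that(3)] that(4) by simp
    then have "set (map Suc I') = A" "set (map Suc J') = B" using pbraid_between_unique[OF \<beta>] by auto
    then have IJ: "I' = ?I" "J' = ?J" using that(1,2) label_list_unique by (auto simp: index_list_def)
    then have "k = ?k" using that(1) I(1) by (simp add: index_list_def)
    then show ?thesis using IJ bij_betw_imp_inj_on[OF bij] x that(3,4) by (auto dest: inj_onD)
  qed
  show "\<exists>!(k, I, J, x). k \<le> n \<and> length I = k \<and> length J = k \<and>
     sorted_wrt (<) I \<and> sorted_wrt (<) J \<and> (\<forall>i\<in>set I. i \<le> n - 1) \<and> (\<forall>j\<in>set J. j \<le> n - 1) \<and>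
     x \<in> Br k \<and> \<beta> = normal_form n k I J x"
    using I(1) J(1) x unique assms by (auto simp: index_list_def intro!: ex1I[of _ "(?k, ?I, ?J, x)"])
qed

end
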